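(* If the rows of ${\bf q}$ are pairwise distinct, then $\mathrm{Aut}_{\rm gr}(\mathcal{O}_{\bf q}(k^{n}))\cong(k^* )^n\rtimes\mathcal P_{\bf q}$.
   Context: Let $k$ be a field, $k^*=k\setminus\{0\}$, $n\ge1$, and ${\bf q}=(q_{ij})\in\mathcal M_n(k)$ with $q_{ij}q_{ji}=1$, $q_{ii}=1$ for all $i,j$. The quantum affine space is $\mathcal{O}_{\bf q}(k^{n})=k\langle x_1,\dots,x_n\rangle/\langle x_jx_i-q_{ij}x_ix_j,\ 1\le i,j\le n\rangle$, $\mathbb N$-graded with $\deg x_i=1$; $\mathrm{Aut}_{\rm gr}$ denotes its group of graded algebra automorphisms. $\mathcal P_{\bf q}=\{\pi\in S_n: q_{\pi(i)\pi(j)}=q_{ij}\ \forall\,1\le i,j\le n\}$, acting on $(k^* )^n$ (the diagonal automorphisms $x_i\mapsto\lambda_ix_i$) by permuting coordinates. *)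

theory Defs
  imports "HOL-Algebra.QuotRing" "HOL-Algebra.Ideal" "HOL-Combinatorics.Permutations"
begin

section \<open>Free algebra k<x_0,...,x_(n-1)> as finitely supported functions on words\<close>

definition fa_carrier :: "nat \<Rightarrow> (nat list \<Rightarrow> 'k::field) set" where
  "fa_carrier n = {f. finite {w. f w \<noteq> 0} \<and> (\<forall>w. f w \<noteq> 0 \<longrightarrow> set w \<subseteq> {..<n})}"

definition fa_mult :: "(nat list \<Rightarrow> 'k::field) \<Rightarrow> (nat list \<Rightarrow> 'k) \<Rightarrow> nat list \<Rightarrow> 'k" where
  "fa_mult f g w = (\<Sum>i\<le>length w. f (take i w) * g (drop i w))"

definition fa_const :: "'k::field \<Rightarrow> nat list \<Rightarrow> 'k" where
  "fa_const c w = (if w = [] then c else 0)"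

definition FA :: "nat \<Rightarrow> (nat list \<Rightarrow> 'k::field) ring" where
  "FA n = \<lparr>carrier = fa_carrier n, monoid.mult = fa_mult, one = fa_const 1,
           zero = (\<lambda>_. 0), add = (\<lambda>f g w. f w + g w)\<rparr>"

definition fa_var :: "nat \<Rightarrow> nat list \<Rightarrow> 'k::field" where
  "fa_var i w = (if w = [i] then 1 else 0)"

definition qrel :: "(nat \<Rightarrow> nat \<Rightarrow> 'k::field) \<Rightarrow> nat \<Rightarrow> nat \<Rightarrow> nat list \<Rightarrow> 'k" where
  "qrel q i j w = fa_mult (fa_var j) (fa_var i) w - q i j * fa_mult (fa_var i) (fa_var j) w"

definition qrels :: "nat \<Rightarrow> (nat \<Rightarrow> nat \<Rightarrow> 'k::field) \<Rightarrow> (nat list \<Rightarrow> 'k) set" where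
  "qrels n q = {qrel q i j | i j. i < n \<and> j < n}"

definition qideal :: "nat \<Rightarrow> (nat \<Rightarrow> nat \<Rightarrow> 'k::field) \<Rightarrow> (nat list \<Rightarrow> 'k) set" where
  "qideal n q = genideal (FA n) (qrels n q)"

definition Oq :: "nat \<Rightarrow> (nat \<Rightarrow> nat \<Rightarrow> 'k::field) \<Rightarrow> (nat list \<Rightarrow> 'k) set ring" where
  "Oq n q = FA n Quot qideal n q"

definition Oq_scalar :: "nat \<Rightarrow> (nat \<Rightarrow> nat \<Rightarrow> 'k::field) \<Rightarrow> 'k \<Rightarrow> (nat list \<Rightarrow> 'k) set" where
  "Oq_scalar n q c = qideal n q +>\<^bsub>FA n\<^esub> fa_const c"

definition Oq_hom :: "nat \<Rightarrow> (nat \<Rightarrow> nat \<Rightarrow> 'k::field) \<Rightarrow> nat \<Rightarrow> (nat list \<Rightarrow> 'k) set set" where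
  "Oq_hom n q d = {qideal n q +>\<^bsub>FA n\<^esub> f | f. f \<in> carrier (FA n) \<and> (\<forall>w. f w \<noteq> 0 \<longrightarrow> length w = d)}"

definition Aut_gr_set :: "nat \<Rightarrow> (nat \<Rightarrow> nat \<Rightarrow> 'k::field) \<Rightarrow> ((nat list \<Rightarrow> 'k) set \<Rightarrow> (nat list \<Rightarrow> 'k) set) set" where
  "Aut_gr_set n q = {\<phi>. \<phi> \<in> ring_iso (Oq n q) (Oq n q)
      \<and> \<phi> \<in> extensional (carrier (Oq n q))
      \<and> (\<forall>c a. a \<in> carrier (Oq n q) \<longrightarrow>
             \<phi> (Oq_scalar n q c \<otimes>\<^bsub>Oq n q\<^esub> a) = Oq_scalar n q c \<otimes>\<^bsub>Oq n q\<^esub> \<phi> a)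
      \<and> (\<forall>d. \<phi> ` Oq_hom n q d \<subseteq> Oq_hom n q d)}"

definition Aut_gr :: "nat \<Rightarrow> (nat \<Rightarrow> nat \<Rightarrow> 'k::field) \<Rightarrow> ((nat list \<Rightarrow> 'k) set \<Rightarrow> (nat list \<Rightarrow> 'k) set) monoid" where
  "Aut_gr n q = \<lparr>carrier = Aut_gr_set n q,
                 monoid.mult = (\<lambda>\<phi> \<psi>. compose (carrier (Oq n q)) \<phi> \<psi>),
                 one = (\<lambda>x\<in>carrier (Oq n q). x)\<rparr>"

definition Pq :: "nat \<Rightarrow> (nat \<Rightarrow> nat \<Rightarrow> 'k) \<Rightarrow> (nat \<Rightarrow> nat) set" where
  "Pq n q = {\<pi>. \<pi> permutes {..<n} \<and> (\<forall>i<n. \<forall>j<n. q (\<pi> i) (\<pi> j) = q i j)}"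

definition perm_act :: "nat \<Rightarrow> (nat \<Rightarrow> nat) \<Rightarrow> (nat \<Rightarrow> 'k) \<Rightarrow> nat \<Rightarrow> 'k" where
  "perm_act n \<pi> l = (\<lambda>i\<in>{..<n}. l (inv_into {..<n} \<pi> i))"

definition semidirect :: "nat \<Rightarrow> (nat \<Rightarrow> nat \<Rightarrow> 'k::field) \<Rightarrow> ((nat \<Rightarrow> 'k) \<times> (nat \<Rightarrow> nat)) monoid" where
  "semidirect n q = \<lparr>carrier = ({..<n} \<rightarrow>\<^sub>E (UNIV - {0})) \<times> Pq n q,
     monoid.mult = (\<lambda>(l, \<pi>) (m, \<sigma>). ((\<lambda>i\<in>{..<n}. l i * perm_act n \<pi> m i), \<pi> \<circ> \<sigma>)),
     one = ((\<lambda>i\<in>{..<n}. 1), id)\<rparr>"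

end

theory Submission
  imports Defs
begin

text \<open>Every word in the generators equals, in \<open>\<O>\<^sub>q\<close>, a nonzero scalar times the ordered
monomial with the same letters. So for every multiset \<open>M\<close> of letters, "the coefficient of the
ordered monomial \<open>x\<^sup>M\<close>" is a linear functional on the free algebra that vanishes on the ideal
of relations, and it separates the elements of \<open>\<O>\<^sub>q\<close> that we need to tell apart.

A graded automorphism \<open>\<phi>\<close> is determined by the linear forms \<open>\<phi>(x\<^sub>i)\<close>. Each \<open>x\<^sub>i\<close> is normal
(\<open>x\<^sub>i A = A' x\<^sub>i\<close> for linear \<open>A\<close>) and \<open>\<phi>\<close> is onto in degree one, so \<open>z = \<phi>(x\<^sub>i)\<close> satisfies
\<open>z x\<^sub>l = v z\<close> for some linear \<open>v\<close>, for every \<open>l\<close>. Comparing coefficients of quadratic ordered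
monomials gives \<open>q\<^bsub>la\<^esub> = v\<^sub>l\<close> for every letter \<open>a\<close> in the support of \<open>z\<close>; two such
letters would have equal rows of \<open>q\<close>. So \<open>\<phi>(x\<^sub>i) = \<gamma>\<^sub>i x\<^bsub>\<pi> i\<^esub>\<close>, the relations force
\<open>\<pi> \<in> P\<^sub>q\<close>, and \<open>(\<gamma>, \<pi>) \<mapsto> \<phi>\<close> is the required isomorphism.\<close>

section \<open>The free algebra\<close>

lemma fa_mult_Nil: "fa_mult f g [] = f [] * g []"
  by (simp add: fa_mult_def)

lemma fa_mult_Cons: "fa_mult f g (a # w) = f [] * g (a # w) + fa_mult (\<lambda>u. f (a # u)) g w"
  unfolding fa_mult_def length_Cons sum.atMost_Suc_shift by simp

lemma fa_mult_ldistr: "fa_mult (\<lambda>w. f w + g w) h w = fa_mult f h w + fa_mult g h w"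
  by (simp add: fa_mult_def sum.distrib algebra_simps)

lemma fa_mult_rdistr: "fa_mult h (\<lambda>w. f w + g w) w = fa_mult h f w + fa_mult h g w"
  by (simp add: fa_mult_def sum.distrib algebra_simps)

lemma fa_mult_smult_left: "fa_mult (\<lambda>u. c * f u) h w = c * fa_mult f h w"
  by (simp add: fa_mult_def sum_distrib_left algebra_simps)

lemma fa_mult_assoc: "fa_mult (fa_mult f g) h w = fa_mult f (fa_mult g h) w"
proof (induction w arbitrary: f)
  case Nil
  then show ?case by (simp add: fa_mult_Nil)
next
  case (Cons a w)
  have "fa_mult (\<lambda>u. fa_mult f g (a # u)) h w
      = f [] * fa_mult (\<lambda>u. g (a # u)) h w + fa_mult (fa_mult (\<lambda>u. f (a # u)) g) h w"
    by (simp only: fa_mult_Cons fa_mult_ldistr fa_mult_smult_left)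
  then have "fa_mult (fa_mult f g) h (a # w)
      = f [] * g [] * h (a # w) + f [] * fa_mult (\<lambda>u. g (a # u)) h w
        + fa_mult f (fa_mult g h) (a # w) - f [] * fa_mult g h (a # w)"
    unfolding fa_mult_Cons[of "fa_mult f g"] Cons.IH by (simp add: fa_mult_Nil fa_mult_Cons)
  also have "\<dots> = fa_mult f (fa_mult g h) (a # w)"
    by (simp add: fa_mult_Nil fa_mult_Cons algebra_simps)
  finally show ?case .
qed

lemma fa_mult_const_left: "fa_mult (fa_const c) f = (\<lambda>w. c * f w)"
proof
  fix w
  have "fa_mult (fa_const c) f w = (\<Sum>i\<le>length w. if i = 0 then c * f w else 0)"
    unfolding fa_mult_def by (rule sum.cong) (auto simp: fa_const_def)
  then show "fa_mult (fa_const c) f w = c * f w" by simp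
qed

lemma fa_mult_one_right: "fa_mult f (fa_const 1) w = f w"
proof -
  have "fa_mult f (fa_const 1) w = (\<Sum>i\<le>length w. if i = length w then f w else 0)"
    unfolding fa_mult_def by (rule sum.cong) (auto simp: fa_const_def)
  then show ?thesis by simp
qed

lemma fa_mult_nonzero:
  assumes "fa_mult f g w \<noteq> 0"
  shows "\<exists>u v. w = u @ v \<and> f u \<noteq> 0 \<and> g v \<noteq> 0"
proof -
  from assms obtain i where "f (take i w) * g (drop i w) \<noteq> 0"
    unfolding fa_mult_def by (meson sum.neutral)
  then show ?thesis by (intro exI[of _ "take i w"] exI[of _ "drop i w"]) auto
qed

lemma fa_carrierI:
  assumes "finite W" "\<And>w. f w \<noteq> 0 \<Longrightarrow> w \<in> W" "\<And>w. w \<in> W \<Longrightarrow> set w \<subseteq> {..<n}"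
  shows "f \<in> fa_carrier n"
proof -
  have "{w. f w \<noteq> 0} \<subseteq> W" using assms(2) by auto
  then show ?thesis using assms unfolding fa_carrier_def by (auto intro: finite_subset)
qed

lemma fa_carrier_zero: "f \<in> fa_carrier n \<Longrightarrow> \<not> set w \<subseteq> {..<n} \<Longrightarrow> f w = 0"
  unfolding fa_carrier_def by auto

lemma fa_carrier_restrict: "f \<in> fa_carrier n \<Longrightarrow> (\<lambda>w. if P w then f w else 0) \<in> fa_carrier n"
  unfolding fa_carrier_def by (auto intro: finite_subset[of _ "{w. f w \<noteq> 0}"])

lemma fa_mult_carrier:
  assumes "f \<in> fa_carrier n" "g \<in> fa_carrier n"
  shows "fa_mult f g \<in> fa_carrier n"
proof (rule fa_carrierI)
  let ?W = "(\<lambda>(u,v). u @ v) ` ({u. f u \<noteq> 0} \<times> {v. g v \<noteq> 0})"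
  show "finite ?W" using assms by (auto simp: fa_carrier_def)
  show "w \<in> ?W" if "fa_mult f g w \<noteq> 0" for w
    using fa_mult_nonzero[OF that] by fastforce
  show "set w \<subseteq> {..<n}" if "w \<in> ?W" for w
    using that assms unfolding fa_carrier_def by fastforce
qed

lemma fa_add_carrier: "f \<in> fa_carrier n \<Longrightarrow> g \<in> fa_carrier n \<Longrightarrow> (\<lambda>w. f w + g w) \<in> fa_carrier n"
  by (rule fa_carrierI[where W="{w. f w \<noteq> 0} \<union> {w. g w \<noteq> 0}"]) (auto simp: fa_carrier_def)

lemma fa_smult_carrier: "f \<in> fa_carrier n \<Longrightarrow> (\<lambda>w. c * f w) \<in> fa_carrier n"
  unfolding fa_carrier_def by (auto intro: finite_subset)

lemma fa_neg_carrier: "f \<in> fa_carrier n \<Longrightarrow> (\<lambda>w. - f w) \<in> fa_carrier n"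
  unfolding fa_carrier_def by auto

lemma fa_diff_carrier: "f \<in> fa_carrier n \<Longrightarrow> g \<in> fa_carrier n \<Longrightarrow> (\<lambda>w. f w - g w) \<in> fa_carrier n"
  using fa_add_carrier[of f n "\<lambda>w. - g w"] fa_neg_carrier[of g n] by simp

lemma fa_zero_carrier: "(\<lambda>_. 0) \<in> fa_carrier n"
  unfolding fa_carrier_def by auto

lemma fa_const_carrier: "fa_const c \<in> fa_carrier n"
  by (rule fa_carrierI[where W="{[]}"]) (auto simp: fa_const_def split: if_splits)

lemma FA_simps:
  "carrier (FA n) = fa_carrier n"
  "monoid.mult (FA n) = fa_mult"
  "one (FA n) = fa_const 1"
  "zero (FA n) = (\<lambda>_. 0)"
  "add (FA n) = (\<lambda>f g w. f w + g w)"
  by (simp_all add: FA_def)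

lemma ring_FA: "ring (FA n)"
proof (rule ringI)
  show "abelian_group (FA n)"
    by (rule abelian_groupI)
       (auto simp: FA_simps fa_add_carrier fa_zero_carrier algebra_simps
             intro!: bexI[of _ "\<lambda>w. - _ w"] fa_neg_carrier)
  show "monoid (FA n)"
    by (rule monoidI)
       (auto simp: FA_simps fa_mult_carrier fa_const_carrier fa_mult_assoc fa_mult_const_left
          fa_mult_one_right)
qed (auto simp: FA_simps fa_mult_ldistr fa_mult_rdistr)

lemma FA_a_inv: "f \<in> fa_carrier n \<Longrightarrow> \<ominus>\<^bsub>FA n\<^esub> f = (\<lambda>w. - f w)"
proof -
  assume "f \<in> fa_carrier n"
  interpret ring "FA n" by (rule ring_FA)
  show ?thesis
    by (rule minus_equality) (auto simp: FA_simps \<open>f \<in> fa_carrier n\<close> fa_neg_carrier)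
qed

lemma FA_minus: "f \<in> fa_carrier n \<Longrightarrow> g \<in> fa_carrier n \<Longrightarrow> f \<ominus>\<^bsub>FA n\<^esub> g = (\<lambda>w. f w - g w)"
  by (simp add: a_minus_def FA_a_inv FA_simps)

definition fa_monom :: "nat list \<Rightarrow> 'k::field \<Rightarrow> nat list \<Rightarrow> 'k" where
  "fa_monom w c = (\<lambda>u. if u = w then c else 0)"

lemma fa_monom_carrier: "set w \<subseteq> {..<n} \<Longrightarrow> fa_monom w c \<in> fa_carrier n"
  by (rule fa_carrierI[where W="{w}"]) (auto simp: fa_monom_def split: if_splits)

lemma fa_var_monom: "fa_var i = fa_monom [i] 1"
  by (auto simp: fa_var_def fa_monom_def)

lemma fa_var_carrier: "i < n \<Longrightarrow> fa_var i \<in> fa_carrier n"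
  unfolding fa_var_monom by (rule fa_monom_carrier) simp

lemma fa_monom_Nil: "fa_monom [] c = fa_const c"
  by (auto simp: fa_const_def fa_monom_def)

lemma fa_monom_zero: "fa_monom w 0 = (\<lambda>_. 0)"
  by (auto simp: fa_monom_def)

lemma fa_smult_monom: "(\<lambda>u. c * fa_monom w d u) = fa_monom w (c * d)"
  by (auto simp: fa_monom_def)

lemma fa_mult_monom: "fa_mult (fa_monom u c) (fa_monom v d) = fa_monom (u @ v) (c * d)"
proof
  fix w
  have "fa_monom u c (take k w) * fa_monom v d (drop k w)
      = (if k = length u then fa_monom (u @ v) (c * d) w else 0)" if "k \<le> length w" for k
  proof -
    have iff: "(take k w = u \<and> drop k w = v) \<longleftrightarrow> (k = length u \<and> w = u @ v)"
    proof
      assume "take k w = u \<and> drop k w = v"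
      then show "k = length u \<and> w = u @ v"
        using that by (metis append_take_drop_id length_take min.absorb2)
    qed auto
    have "fa_monom u c (take k w) * fa_monom v d (drop k w)
        = (if take k w = u \<and> drop k w = v then c * d else 0)"
      by (simp add: fa_monom_def)
    then show ?thesis unfolding iff by (simp add: fa_monom_def)
  qed
  then have "fa_mult (fa_monom u c) (fa_monom v d) w
      = (\<Sum>k\<le>length w. if k = length u then fa_monom (u @ v) (c * d) w else 0)"
    unfolding fa_mult_def by (intro sum.cong) auto
  also have "\<dots> = fa_monom (u @ v) (c * d) w"
    by (subst sum.delta[OF finite_atMost]) (auto simp: fa_monom_def)
  finally show "fa_mult (fa_monom u c) (fa_monom v d) w = fa_monom (u @ v) (c * d) w" .
qed

lemma fa_carrier_induct [consumes 2, case_names zero monom add]: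
  fixes f :: "nat list \<Rightarrow> 'k::field"
  assumes "f \<in> fa_carrier n" "\<forall>w. f w \<noteq> 0 \<longrightarrow> D w"
    and zero: "P (\<lambda>_. 0)"
    and monom: "\<And>w c. set w \<subseteq> {..<n} \<Longrightarrow> D w \<Longrightarrow> P (fa_monom w c)"
    and add: "\<And>g h. g \<in> fa_carrier n \<Longrightarrow> h \<in> fa_carrier n \<Longrightarrow> P g \<Longrightarrow> P h \<Longrightarrow>
      P (\<lambda>w. g w + h w)"
  shows "P f"
proof -
  have "P g" if "finite S" "g \<in> fa_carrier n" "\<forall>w. g w \<noteq> 0 \<longrightarrow> D w \<and> w \<in> S"
    for g :: "nat list \<Rightarrow> 'k" and S
    using that
  proof (induction S arbitrary: g rule: finite_induct)
    case empty
    then have "g = (\<lambda>_. 0)" by auto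
    then show ?case using zero by simp
  next
    case (insert x S)
    let ?rest = "\<lambda>w. if w \<noteq> x then g w else 0"
    have rest: "?rest \<in> fa_carrier n"
      using insert.prems(1) fa_carrier_restrict[of g n "\<lambda>w. w \<noteq> x"] by blast
    moreover have "\<forall>w. ?rest w \<noteq> 0 \<longrightarrow> D w \<and> w \<in> S" using insert.prems(2) by auto
    ultimately have "P ?rest" by (rule insert.IH)
    moreover have "fa_monom x (g x) \<in> fa_carrier n \<and> P (fa_monom x (g x))"
    proof (cases "g x = 0")
      case True
      then show ?thesis using zero fa_zero_carrier by (simp add: fa_monom_zero)
    next
      case False
      then have "set x \<subseteq> {..<n}" "D x"
        using insert.prems by (auto simp: fa_carrier_def)
      then show ?thesis using monom fa_monom_carrier by blast
    qed
    moreover have "g = (\<lambda>w. ?rest w + fa_monom x (g x) w)" by (auto simp: fa_monom_def)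
    ultimately show ?case using add[OF rest] by metis
  qed
  moreover have "finite {w. f w \<noteq> 0}" using assms(1) by (simp add: fa_carrier_def)
  ultimately show ?thesis using assms(1,2) by blast
qed

section \<open>Coefficients of ordered monomials\<close>

text \<open>With \<open>x\<^sub>b x\<^sub>a = q\<^bsub>ab\<^esub> x\<^sub>a x\<^sub>b\<close>, sorting a word \<open>w\<close> into increasing order multiplies it by
\<open>word_weight q w\<close>, the product of \<open>q\<^bsub>ab\<^esub>\<close> over the inversions \<open>(b, a)\<close>, \<open>a < b\<close>, of \<open>w\<close>.
So \<open>ord_coeff q M f\<close> is the coefficient of the ordered monomial with letters \<open>M\<close> in the
normal form of \<open>f\<close>.\<close>

definition swap_factor :: "(nat \<Rightarrow> nat \<Rightarrow> 'k::field) \<Rightarrow> nat \<Rightarrow> nat \<Rightarrow> 'k" where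
  "swap_factor q a b = (if b < a then q b a else 1)"

fun word_weight :: "(nat \<Rightarrow> nat \<Rightarrow> 'k::field) \<Rightarrow> nat list \<Rightarrow> 'k" where
  "word_weight q [] = 1"
| "word_weight q (a # w) = prod_list (map (swap_factor q a) w) * word_weight q w"

definition cross_weight :: "(nat \<Rightarrow> nat \<Rightarrow> 'k::field) \<Rightarrow> nat multiset \<Rightarrow> nat multiset \<Rightarrow> 'k" where
  "cross_weight q A B = prod_mset (image_mset (\<lambda>a. prod_mset (image_mset (swap_factor q a) B)) A)"

lemma word_weight_append:
  "word_weight q (u @ v) = word_weight q u * word_weight q v * cross_weight q (mset u) (mset v)"
proof -
  have "prod_list (map f w) = prod_mset (image_mset f (mset w))" for f :: "nat \<Rightarrow> 'a" and w
    by (induct w) auto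
  then show ?thesis by (induct u) (auto simp: cross_weight_def algebra_simps)
qed

definition words_of :: "nat multiset \<Rightarrow> nat list set" where
  "words_of M = {w. mset w = M}"

definition words_within :: "nat multiset \<Rightarrow> nat list set" where
  "words_within M = {w. mset w \<subseteq># M}"

lemma finite_words_of: "finite (words_of M)"
proof -
  have "words_of M \<subseteq> {w. set w \<subseteq> set_mset M \<and> length w = size M}"
    unfolding words_of_def by auto
  then show ?thesis by (rule finite_subset) (simp add: finite_lists_length_eq)
qed

lemma finite_words_within: "finite (words_within M)"
proof -
  have "words_within M \<subseteq> {w. set w \<subseteq> set_mset M \<and> length w \<le> size M}"
    unfolding words_within_def by (auto dest: mset_subset_eqD) (metis size_mset size_mset_mono)
  then show ?thesis by (rule finite_subset) (simp add: finite_lists_length_le)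
qed

lemma mset_take_drop:
  "mset (take i w) \<subseteq># mset w" "mset (drop i w) = mset w - mset (take i w)"
  "mset w - (mset w - mset (take i w)) = mset (take i w)"
proof -
  have "mset w = mset (take i w) + mset (drop i w)"
    by (metis append_take_drop_id mset_append)
  then show "mset (take i w) \<subseteq># mset w" "mset (drop i w) = mset w - mset (take i w)"
    "mset w - (mset w - mset (take i w)) = mset (take i w)" by simp_all
qed

lemma sum_words_of_split_left:
  "(\<Sum>w\<in>words_of M. \<Sum>i\<le>length w. F (take i w) (drop i w))
   = (\<Sum>u\<in>words_within M. \<Sum>v\<in>words_of (M - mset u). F u v)"
proof -
  have "(\<Sum>w\<in>words_of M. \<Sum>i\<le>length w. F (take i w) (drop i w))
      = (\<Sum>(w,i)\<in>Sigma (words_of M) (\<lambda>w. {..length w}). F (take i w) (drop i w))"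
    by (rule sum.Sigma) (auto simp: finite_words_of)
  also have "\<dots> = (\<Sum>(u,v)\<in>Sigma (words_within M) (\<lambda>u. words_of (M - mset u)). F u v)"
    by (rule sum.reindex_bij_witness[where j="\<lambda>(w,i). (take i w, drop i w)"
          and i="\<lambda>(u,v). (u @ v, length u)"])
       (auto simp: words_of_def words_within_def mset_take_drop)
  also have "\<dots> = (\<Sum>u\<in>words_within M. \<Sum>v\<in>words_of (M - mset u). F u v)"
    by (rule sum.Sigma[symmetric]) (auto simp: finite_words_within finite_words_of)
  finally show ?thesis .
qed

lemma sum_words_of_split_right:
  "(\<Sum>w\<in>words_of M. \<Sum>i\<le>length w. F (take i w) (drop i w))
   = (\<Sum>v\<in>words_within M. \<Sum>u\<in>words_of (M - mset v). F u v)"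
proof -
  have "(\<Sum>w\<in>words_of M. \<Sum>i\<le>length w. F (take i w) (drop i w))
      = (\<Sum>(w,i)\<in>Sigma (words_of M) (\<lambda>w. {..length w}). F (take i w) (drop i w))"
    by (rule sum.Sigma) (auto simp: finite_words_of)
  also have "\<dots> = (\<Sum>(v,u)\<in>Sigma (words_within M) (\<lambda>v. words_of (M - mset v)). F u v)"
    by (rule sum.reindex_bij_witness[where j="\<lambda>(w,i). (drop i w, take i w)"
          and i="\<lambda>(v,u). (u @ v, length u)"])
       (auto simp: words_of_def words_within_def mset_take_drop)
  also have "\<dots> = (\<Sum>v\<in>words_within M. \<Sum>u\<in>words_of (M - mset v). F u v)"
    by (rule sum.Sigma[symmetric]) (auto simp: finite_words_within finite_words_of)
  finally show ?thesis .
qed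

definition ord_coeff :: "(nat \<Rightarrow> nat \<Rightarrow> 'k::field) \<Rightarrow> nat multiset \<Rightarrow> (nat list \<Rightarrow> 'k) \<Rightarrow> 'k" where
  "ord_coeff q M f = (\<Sum>w\<in>words_of M. f w * word_weight q w)"

lemma ord_coeff_mult_left_eq_0:
  assumes "\<And>M. ord_coeff q M f = 0"
  shows "ord_coeff q M (fa_mult g f) = 0"
proof -
  have "ord_coeff q M (fa_mult g f) = (\<Sum>w\<in>words_of M. \<Sum>i\<le>length w.
      g (take i w) * f (drop i w) * word_weight q (take i w @ drop i w))"
    unfolding ord_coeff_def fa_mult_def by (simp add: sum_distrib_right)
  also have "\<dots> = (\<Sum>u\<in>words_within M. \<Sum>v\<in>words_of (M - mset u). g u * f v * word_weight q (u @ v))"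
    by (rule sum_words_of_split_left)
  also have "\<dots> = (\<Sum>u\<in>words_within M.
      g u * word_weight q u * cross_weight q (mset u) (M - mset u) * ord_coeff q (M - mset u) f)"
    unfolding ord_coeff_def
    by (rule sum.cong[OF refl], simp add: sum_distrib_left word_weight_append, rule sum.cong)
       (auto simp: words_of_def algebra_simps)
  also have "\<dots> = 0" by (simp add: assms)
  finally show ?thesis .
qed

lemma ord_coeff_mult_right_eq_0:
  assumes "\<And>M. ord_coeff q M f = 0"
  shows "ord_coeff q M (fa_mult f g) = 0"
proof -
  have "ord_coeff q M (fa_mult f g) = (\<Sum>w\<in>words_of M. \<Sum>i\<le>length w.
      f (take i w) * g (drop i w) * word_weight q (take i w @ drop i w))"
    unfolding ord_coeff_def fa_mult_def by (simp add: sum_distrib_right)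
  also have "\<dots> = (\<Sum>v\<in>words_within M. \<Sum>u\<in>words_of (M - mset v). f u * g v * word_weight q (u @ v))"
    by (rule sum_words_of_split_right)
  also have "\<dots> = (\<Sum>v\<in>words_within M.
      g v * word_weight q v * cross_weight q (M - mset v) (mset v) * ord_coeff q (M - mset v) f)"
    unfolding ord_coeff_def
    by (rule sum.cong[OF refl], simp add: sum_distrib_left word_weight_append, rule sum.cong)
       (auto simp: words_of_def algebra_simps)
  also have "\<dots> = 0" by (simp add: assms)
  finally show ?thesis .
qed

lemma ord_coeff_add: "ord_coeff q M (\<lambda>w. f w + g w) = ord_coeff q M f + ord_coeff q M g"
  by (simp add: ord_coeff_def sum.distrib algebra_simps)

lemma ord_coeff_neg: "ord_coeff q M (\<lambda>w. - f w) = - ord_coeff q M f"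
  by (simp add: ord_coeff_def sum_negf)

lemma ord_coeff_diff: "ord_coeff q M (\<lambda>w. f w - g w) = ord_coeff q M f - ord_coeff q M g"
  by (simp add: ord_coeff_def sum_subtractf algebra_simps)

lemma ord_coeff_zero: "ord_coeff q M (\<lambda>w. 0) = 0"
  by (simp add: ord_coeff_def)

lemma ord_coeff_smult: "ord_coeff q M (\<lambda>w. c * f w) = c * ord_coeff q M f"
  by (simp add: ord_coeff_def sum_distrib_left algebra_simps)

lemma ord_coeff_monom:
  "ord_coeff q M (fa_monom w c) = (if mset w = M then c * word_weight q w else 0)"
proof -
  have "ord_coeff q M (fa_monom w c) = (\<Sum>u\<in>words_of M. if u = w then c * word_weight q w else 0)"
    unfolding ord_coeff_def fa_monom_def by (rule sum.cong) auto
  also have "\<dots> = (if mset w = M then c * word_weight q w else 0)"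
    by (subst sum.delta[OF finite_words_of]) (simp add: words_of_def)
  finally show ?thesis .
qed

lemma ord_coeff_singleton: "ord_coeff q {#a#} f = f [a]"
proof -
  have "words_of {#a#} = {[a]}" by (auto simp: words_of_def)
  then show ?thesis by (simp add: ord_coeff_def)
qed

lemma words_of_pair: "words_of {#a, b#} = {[a, b], [b, a]}"
proof -
  have "w = [a, b] \<or> w = [b, a]" if "mset w = {#a, b#}" for w
  proof -
    have "length w = 2" using that size_mset[of w] by simp
    then obtain x y where w: "w = [x, y]"
      by (auto simp: numeral_2_eq_2 length_Suc_conv)
    with that have "{#x, y#} = {#a, b#}" by simp
    then show ?thesis using w by (auto simp: add_eq_conv_ex)
  qed
  then show ?thesis by (auto simp: words_of_def)
qed

lemma ord_coeff_pair:
  "a \<noteq> b \<Longrightarrow> ord_coeff q {#a, b#} f = f [a, b] * swap_factor q a b + f [b, a] * swap_factor q b a"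
  by (simp add: ord_coeff_def words_of_pair)

lemma ord_coeff_square: "ord_coeff q {#a, a#} f = f [a, a]"
  by (simp add: ord_coeff_def words_of_pair swap_factor_def)

locale qaffine =
  fixes n :: nat and q :: "nat \<Rightarrow> nat \<Rightarrow> 'k::field"
  assumes q_inverse: "\<And>i j. i < n \<Longrightarrow> j < n \<Longrightarrow> q i j * q j i = 1"
    and q_diag: "\<And>i. i < n \<Longrightarrow> q i i = 1"
begin

abbreviation "I \<equiv> qideal n q"
abbreviation "R \<equiv> FA n :: (nat list \<Rightarrow> 'k) ring"
abbreviation "OQ \<equiv> Oq n q"
abbreviation "cl f \<equiv> I +>\<^bsub>R\<^esub> f"

lemma q_nonzero: "i < n \<Longrightarrow> j < n \<Longrightarrow> q i j \<noteq> 0"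
  using q_inverse by force

lemma swap_factor_nonzero: "a < n \<Longrightarrow> b < n \<Longrightarrow> swap_factor q a b \<noteq> 0"
  by (simp add: swap_factor_def q_nonzero)

lemma swap_factor_commute: "a < n \<Longrightarrow> b < n \<Longrightarrow> swap_factor q b a = q a b * swap_factor q a b"
  using q_inverse[of a b] q_diag[of a] by (auto simp: swap_factor_def algebra_simps)

lemma qrel_eq: "qrel q i j = (\<lambda>w. fa_monom [j, i] 1 w - q i j * fa_monom [i, j] 1 w)"
  by (simp add: fun_eq_iff qrel_def fa_var_monom fa_mult_monom)

lemma qrel_carrier: "i < n \<Longrightarrow> j < n \<Longrightarrow> qrel q i j \<in> fa_carrier n"
  unfolding qrel_eq by (intro fa_diff_carrier fa_smult_carrier fa_monom_carrier) auto

lemma qrels_subset_carrier: "qrels n q \<subseteq> carrier R"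
  by (auto simp: qrels_def FA_simps qrel_carrier)

lemma ideal_qideal: "ideal I R"
  unfolding qideal_def by (rule ring.genideal_ideal[OF ring_FA qrels_subset_carrier])

lemma qrel_in_qideal: "i < n \<Longrightarrow> j < n \<Longrightarrow> qrel q i j \<in> I"
  using ring.genideal_self[OF ring_FA qrels_subset_carrier] by (auto simp: qideal_def qrels_def)

lemma qideal_smult: "f \<in> I \<Longrightarrow> (\<lambda>w. c * f w) \<in> I"
  using ideal.I_l_closed[OF ideal_qideal, of f "fa_const c"]
  by (simp add: FA_simps fa_const_carrier fa_mult_const_left)

lemma qideal_add: "f \<in> I \<Longrightarrow> g \<in> I \<Longrightarrow> (\<lambda>w. f w + g w) \<in> I"
  using additive_subgroup.a_closed[OF ideal.axioms(1)[OF ideal_qideal], of f g]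
  by (simp add: FA_simps)

lemma qideal_zero: "(\<lambda>_. 0) \<in> I"
  using additive_subgroup.zero_closed[OF ideal.axioms(1)[OF ideal_qideal]] by (simp add: FA_simps)

lemma ord_coeff_qrel: "i < n \<Longrightarrow> j < n \<Longrightarrow> ord_coeff q M (qrel q i j) = 0"
  unfolding qrel_eq ord_coeff_diff ord_coeff_smult ord_coeff_monom
  using swap_factor_commute[of j i] q_inverse[of i j]
  by (auto simp: add_mset_commute algebra_simps)

definition ord_coeff_kernel :: "(nat list \<Rightarrow> 'k) set" where
  "ord_coeff_kernel = {f \<in> fa_carrier n. \<forall>M. ord_coeff q M f = 0}"

lemma ideal_ord_coeff_kernel: "ideal ord_coeff_kernel R"
proof (rule idealI[OF ring_FA])
  show "subgroup ord_coeff_kernel (add_monoid R)"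
  proof
    show "ord_coeff_kernel \<subseteq> carrier (add_monoid R)"
      by (auto simp: ord_coeff_kernel_def FA_simps)
    show "x \<otimes>\<^bsub>add_monoid R\<^esub> y \<in> ord_coeff_kernel"
      if "x \<in> ord_coeff_kernel" "y \<in> ord_coeff_kernel" for x y
      using that by (auto simp: ord_coeff_kernel_def FA_simps fa_add_carrier ord_coeff_add)
    show "\<one>\<^bsub>add_monoid R\<^esub> \<in> ord_coeff_kernel"
      by (auto simp: ord_coeff_kernel_def FA_simps fa_zero_carrier ord_coeff_zero)
    show "inv\<^bsub>add_monoid R\<^esub> x \<in> ord_coeff_kernel" if "x \<in> ord_coeff_kernel" for x
    proof -
      have "inv\<^bsub>add_monoid R\<^esub> x = \<ominus>\<^bsub>R\<^esub> x" by (simp add: a_inv_def)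
      also have "\<dots> = (\<lambda>w. - x w)"
        using that by (simp add: FA_a_inv ord_coeff_kernel_def)
      finally have "inv\<^bsub>add_monoid R\<^esub> x = (\<lambda>w. - x w)" .
      then show ?thesis
        using that by (auto simp: ord_coeff_kernel_def fa_neg_carrier ord_coeff_neg)
    qed
  qed
  show "x \<otimes>\<^bsub>R\<^esub> a \<in> ord_coeff_kernel" if "a \<in> ord_coeff_kernel" "x \<in> carrier R" for a x
    using that
    by (auto simp: ord_coeff_kernel_def FA_simps fa_mult_carrier ord_coeff_mult_left_eq_0)
  show "a \<otimes>\<^bsub>R\<^esub> x \<in> ord_coeff_kernel" if "a \<in> ord_coeff_kernel" "x \<in> carrier R" for a x
    using that
    by (auto simp: ord_coeff_kernel_def FA_simps fa_mult_carrier ord_coeff_mult_right_eq_0)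
qed

lemma ord_coeff_qideal: "f \<in> I \<Longrightarrow> ord_coeff q M f = 0"
proof -
  have "I \<subseteq> ord_coeff_kernel"
    unfolding qideal_def
    by (rule ring.genideal_minimal[OF ring_FA ideal_ord_coeff_kernel])
       (auto simp: qrels_def ord_coeff_kernel_def qrel_carrier ord_coeff_qrel)
  then show "f \<in> I \<Longrightarrow> ord_coeff q M f = 0" by (auto simp: ord_coeff_kernel_def)
qed

lemma ring_Oq: "ring OQ"
  unfolding Oq_def by (rule ideal.quotient_is_ring[OF ideal_qideal])

lemma Oq_carrier: "carrier OQ = cl ` fa_carrier n"
  by (auto simp: Oq_def FactRing_def A_RCOSETS_def' FA_simps)

lemma cl_carrier: "f \<in> fa_carrier n \<Longrightarrow> cl f \<in> carrier OQ"
  unfolding Oq_carrier by (rule imageI)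

lemma cl_mult: "f \<in> fa_carrier n \<Longrightarrow> g \<in> fa_carrier n \<Longrightarrow> cl f \<otimes>\<^bsub>OQ\<^esub> cl g = cl (fa_mult f g)"
  using ideal.rcos_ring_hom[OF ideal_qideal] unfolding Oq_def ring_hom_def
  by (auto simp: FA_simps)

lemma cl_add: "f \<in> fa_carrier n \<Longrightarrow> g \<in> fa_carrier n \<Longrightarrow> cl f \<oplus>\<^bsub>OQ\<^esub> cl g = cl (\<lambda>w. f w + g w)"
  using ideal.rcos_ring_hom[OF ideal_qideal] unfolding Oq_def ring_hom_def
  by (auto simp: FA_simps)

lemma cl_one: "\<one>\<^bsub>OQ\<^esub> = cl (fa_const 1)"
  by (simp add: Oq_def FactRing_def FA_simps)

lemma cl_zero: "cl (\<lambda>_. 0) = \<zero>\<^bsub>OQ\<^esub>"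
  using ring_hom_zero[OF ideal.rcos_ring_hom[OF ideal_qideal] ring_FA ring_Oq[unfolded Oq_def]]
  by (simp add: Oq_def FA_simps)

lemma cl_eq_iff:
  "f \<in> fa_carrier n \<Longrightarrow> g \<in> fa_carrier n \<Longrightarrow> cl f = cl g \<longleftrightarrow> (\<lambda>w. f w - g w) \<in> I"
  using ring.quotient_eq_iff_same_a_r_cos[OF ring_FA ideal_qideal, of f g]
  by (simp add: FA_simps FA_minus)

lemma ord_coeff_cl_eq:
  "f \<in> fa_carrier n \<Longrightarrow> g \<in> fa_carrier n \<Longrightarrow> cl f = cl g \<Longrightarrow> ord_coeff q M f = ord_coeff q M g"
  using cl_eq_iff ord_coeff_qideal[of _ M] by (fastforce simp: ord_coeff_diff)

lemma cl_monom_linear_eq: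
  assumes "a < n" "b < n" "c \<noteq> 0" "cl (fa_monom [a] c) = cl (fa_monom [b] d)"
  shows "a = b \<and> c = d"
proof -
  have "ord_coeff q {#a#} (fa_monom [a] c) = ord_coeff q {#a#} (fa_monom [b] d)"
    by (rule ord_coeff_cl_eq) (use assms in \<open>auto intro: fa_monom_carrier\<close>)
  then show ?thesis using assms(3) by (auto simp: ord_coeff_singleton fa_monom_def split: if_splits)
qed

lemma Oq_scalar_carrier: "Oq_scalar n q c \<in> carrier OQ"
  by (simp add: Oq_scalar_def cl_carrier fa_const_carrier)

lemma Oq_scalar_mult: "f \<in> fa_carrier n \<Longrightarrow> Oq_scalar n q c \<otimes>\<^bsub>OQ\<^esub> cl f = cl (\<lambda>w. c * f w)"
  by (simp add: Oq_scalar_def cl_mult fa_const_carrier fa_mult_const_left)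

end

section \<open>Monomial automorphisms\<close>

text \<open>\<open>fa_monomial_map l p\<close> is the algebra endomorphism \<open>x\<^sub>i \<mapsto> l (p i) x\<^bsub>p i\<^esub>\<close> of the free algebra.\<close>

definition fa_monomial_map ::
    "(nat \<Rightarrow> 'k::field) \<Rightarrow> (nat \<Rightarrow> nat) \<Rightarrow> (nat list \<Rightarrow> 'k) \<Rightarrow> nat list \<Rightarrow> 'k" where
  "fa_monomial_map l p f w = prod_list (map l w) * f (map (inv_into UNIV p) w)"

lemma map_permutes_inv: "p permutes S \<Longrightarrow> map p (map (inv_into UNIV p) w) = w"
  by (induct w) (auto simp: permutes_inverses)

lemma map_inv_permutes: "p permutes S \<Longrightarrow> map (inv_into UNIV p) (map p w) = w"
  by (induct w) (auto simp: permutes_inverses)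

lemma set_map_permutes_subset:
  "p permutes {..<n} \<Longrightarrow> set (map p w) \<subseteq> {..<n} \<longleftrightarrow> set w \<subseteq> {..<n}"
  using permutes_in_image[of p "{..<n}"] by auto

lemma fa_monomial_map_carrier:
  assumes p: "p permutes {..<n}" and f: "f \<in> fa_carrier n"
  shows "fa_monomial_map l p f \<in> fa_carrier n"
proof (rule fa_carrierI[where W="map p ` {w. f w \<noteq> 0}"])
  show "finite (map p ` {w. f w \<noteq> 0})" using f by (simp add: fa_carrier_def)
  show "w \<in> map p ` {w. f w \<noteq> 0}" if "fa_monomial_map l p f w \<noteq> 0" for w
    using that map_permutes_inv[OF p, of w] by (force simp: fa_monomial_map_def)
  show "set w \<subseteq> {..<n}" if w: "w \<in> map p ` {w. f w \<noteq> 0}" for w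
  proof -
    obtain x where x: "w = map p x" "f x \<noteq> 0" using w by auto
    then have "set x \<subseteq> {..<n}" using f by (auto simp: fa_carrier_def)
    then show ?thesis using x(1) set_map_permutes_subset[OF p, of x] by simp
  qed
qed

lemma fa_monomial_map_mult:
  "fa_monomial_map l p (fa_mult f g) = fa_mult (fa_monomial_map l p f) (fa_monomial_map l p g)"
proof
  fix w
  have "prod_list (map l w) = prod_list (map l (take i w)) * prod_list (map l (drop i w))" for i
    by (metis append_take_drop_id map_append prod_list.append)
  then show "fa_monomial_map l p (fa_mult f g) w
      = fa_mult (fa_monomial_map l p f) (fa_monomial_map l p g) w"
    unfolding fa_monomial_map_def fa_mult_def sum_distrib_left length_map
    by (intro sum.cong) (simp_all add: take_map drop_map mult_ac)
qed

lemma fa_monomial_map_add: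
  "fa_monomial_map l p (\<lambda>w. f w + g w) = (\<lambda>w. fa_monomial_map l p f w + fa_monomial_map l p g w)"
  by (auto simp: fa_monomial_map_def algebra_simps)

lemma fa_monomial_map_diff:
  "fa_monomial_map l p (\<lambda>w. f w - g w) = (\<lambda>w. fa_monomial_map l p f w - fa_monomial_map l p g w)"
  by (auto simp: fa_monomial_map_def algebra_simps)

lemma fa_monomial_map_smult:
  "fa_monomial_map l p (\<lambda>w. c * f w) = (\<lambda>w. c * fa_monomial_map l p f w)"
  by (auto simp: fa_monomial_map_def algebra_simps)

lemma fa_monomial_map_const: "fa_monomial_map l p (fa_const c) = fa_const c"
  by (auto simp: fa_monomial_map_def fa_const_def)

lemma fa_monomial_map_compose:
  assumes p: "p permutes S" and s: "s permutes S"
  shows "fa_monomial_map l p (fa_monomial_map m s f)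
    = fa_monomial_map (\<lambda>a. l a * m (inv_into UNIV p a)) (p \<circ> s) f"
proof
  fix w
  have "inv_into UNIV (p \<circ> s) = inv_into UNIV s \<circ> inv_into UNIV p"
    by (rule o_inv_distrib) (use p s permutes_bij in auto)
  moreover have "prod_list (map (\<lambda>a. l a * m (inv_into UNIV p a)) w)
      = prod_list (map l w) * prod_list (map m (map (inv_into UNIV p) w))"
    by (induct w) (auto simp: ac_simps)
  ultimately show "fa_monomial_map l p (fa_monomial_map m s f) w
      = fa_monomial_map (\<lambda>a. l a * m (inv_into UNIV p a)) (p \<circ> s) f w"
    unfolding fa_monomial_map_def map_map by (simp add: ac_simps)
qed

lemma fa_monomial_map_cong:
  assumes p: "p permutes {..<n}" and f: "f \<in> fa_carrier n"
    and eq: "\<And>a. a < n \<Longrightarrow> l a = l' a"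
  shows "fa_monomial_map l p f = fa_monomial_map l' p f"
proof
  fix w
  show "fa_monomial_map l p f w = fa_monomial_map l' p f w"
  proof (cases "set w \<subseteq> {..<n}")
    case True
    then have "map l w = map l' w" using eq by (auto intro: map_cong)
    then show ?thesis by (simp only: fa_monomial_map_def)
  next
    case False
    then have "\<not> set (map (inv_into UNIV p) w) \<subseteq> {..<n}"
      using set_map_permutes_subset[OF permutes_inv[OF p]] by blast
    then have "f (map (inv_into UNIV p) w) = 0" by (rule fa_carrier_zero[OF f])
    then show ?thesis by (simp add: fa_monomial_map_def)
  qed
qed

lemma fa_monomial_map_id: "fa_monomial_map (\<lambda>_. 1) id f = f"
proof -
  have "prod_list (map (\<lambda>_. 1 :: 'a) w) = 1" for w :: "nat list" by (induct w) auto
  then show ?thesis by (simp add: fa_monomial_map_def fun_eq_iff)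
qed

lemma fa_monomial_map_monom:
  assumes "p permutes S"
  shows "fa_monomial_map l p (fa_monom w c) = fa_monom (map p w) (prod_list (map l (map p w)) * c)"
proof
  fix u
  have "map (inv_into UNIV p) u = w \<longleftrightarrow> u = map p w"
    using map_permutes_inv[OF assms] map_inv_permutes[OF assms] by metis
  then show "fa_monomial_map l p (fa_monom w c) u
      = fa_monom (map p w) (prod_list (map l (map p w)) * c) u"
    by (auto simp: fa_monomial_map_def fa_monom_def)
qed

lemma fa_monomial_map_var:
  "p permutes S \<Longrightarrow> fa_monomial_map l p (fa_var i) = fa_monom [p i] (l (p i))"
  using fa_monomial_map_monom[of p S l "[i]" 1] by (simp add: fa_var_monom)

lemma Pq_permutes: "p \<in> Pq n q \<Longrightarrow> p permutes {..<n}"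
  by (simp add: Pq_def)

lemma Pq_id: "id \<in> Pq n q"
  by (simp add: Pq_def permutes_id)

lemma Pq_compose:
  assumes p: "p \<in> Pq n q" and s: "s \<in> Pq n q"
  shows "p \<circ> s \<in> Pq n q"
proof -
  have "q (p (s i)) (p (s j)) = q i j" if "i < n" "j < n" for i j
    using that p s permutes_in_image[OF Pq_permutes[OF s]] by (auto simp: Pq_def)
  then show ?thesis
    using permutes_compose[OF Pq_permutes[OF s] Pq_permutes[OF p]] by (auto simp: Pq_def)
qed

lemma Pq_inv:
  assumes p: "p \<in> Pq n q"
  shows "inv_into UNIV p \<in> Pq n q"
proof -
  have pp: "p permutes {..<n}" by (rule Pq_permutes[OF p])
  have ip: "inv_into UNIV p permutes {..<n}" by (rule permutes_inv[OF pp])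
  have "q (inv_into UNIV p i) (inv_into UNIV p j) = q i j" if "i < n" "j < n" for i j
    using that p permutes_in_image[OF ip] permutes_inverses[OF pp]
    by (auto simp: Pq_def) (metis lessThan_iff)
  then show ?thesis using ip by (auto simp: Pq_def)
qed

context qaffine
begin

lemma fa_monomial_map_qrel:
  assumes p: "p \<in> Pq n q" and i: "i < n" and j: "j < n"
  shows "fa_monomial_map l p (qrel q i j) = (\<lambda>w. (l (p i) * l (p j)) * qrel q (p i) (p j) w)"
proof -
  have "q (p i) (p j) = q i j" using p i j by (auto simp: Pq_def)
  moreover have "fa_monom [a, b] (l (p i) * l (p j)) w = l (p i) * l (p j) * fa_monom [a, b] 1 w"
    for a b w
    by (simp add: fa_monom_def)
  ultimately show ?thesis
    unfolding qrel_eq fa_monomial_map_diff fa_monomial_map_smult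
      fa_monomial_map_monom[OF Pq_permutes[OF p]]
    by (simp add: algebra_simps)
qed

lemma fa_monomial_map_qideal:
  assumes p: "p \<in> Pq n q" and f: "f \<in> I"
  shows "fa_monomial_map l p f \<in> I"
proof -
  have pp: "p permutes {..<n}" by (rule Pq_permutes[OF p])
  have "fa_monomial_map l p \<in> ring_hom R R"
    by (rule ring_hom_memI)
       (auto simp: FA_simps fa_monomial_map_carrier[OF pp] fa_monomial_map_mult
          fa_monomial_map_add fa_monomial_map_const)
  then have "ideal {r \<in> carrier R. fa_monomial_map l p r \<in> I} R"
    by (rule ring_hom_ring.ideal_vimage[OF ring_hom_ringI2[OF ring_FA ring_FA] ideal_qideal])
  moreover have "qrels n q \<subseteq> {r \<in> carrier R. fa_monomial_map l p r \<in> I}"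
  proof
    fix r assume "r \<in> qrels n q"
    then obtain i j where r: "r = qrel q i j" "i < n" "j < n" by (auto simp: qrels_def)
    then have "qrel q (p i) (p j) \<in> I"
      using permutes_in_image[OF pp] by (intro qrel_in_qideal) auto
    then show "r \<in> {r \<in> carrier R. fa_monomial_map l p r \<in> I}"
      using r fa_monomial_map_qrel[OF p r(2,3)] qideal_smult
      by (auto simp: FA_simps qrel_carrier)
  qed
  ultimately have "I \<subseteq> {r \<in> carrier R. fa_monomial_map l p r \<in> I}"
    unfolding qideal_def by (rule ring.genideal_minimal[OF ring_FA])
  then show ?thesis using f by auto
qed

text \<open>Well defined for \<open>p \<in> P\<^sub>q\<close>, where \<open>fa_monomial_map l p\<close> preserves the ideal of relations.\<close>

definition monomial_aut ::
    "(nat \<Rightarrow> 'k) \<Rightarrow> (nat \<Rightarrow> nat) \<Rightarrow> (nat list \<Rightarrow> 'k) set \<Rightarrow> (nat list \<Rightarrow> 'k) set" where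
  "monomial_aut l p = (\<lambda>A\<in>carrier OQ. cl (fa_monomial_map l p (SOME f. f \<in> fa_carrier n \<and> A = cl f)))"

lemma monomial_aut_cl:
  assumes p: "p \<in> Pq n q" and f: "f \<in> fa_carrier n"
  shows "monomial_aut l p (cl f) = cl (fa_monomial_map l p f)"
proof -
  have pp: "p permutes {..<n}" by (rule Pq_permutes[OF p])
  define g where "g = (SOME g. g \<in> fa_carrier n \<and> cl f = cl g)"
  have "g \<in> fa_carrier n \<and> cl f = cl g" unfolding g_def by (rule someI[of _ f]) (simp add: f)
  then have g: "g \<in> fa_carrier n" "(\<lambda>w. f w - g w) \<in> I" using cl_eq_iff f by blast+
  then have "fa_monomial_map l p (\<lambda>w. f w - g w) \<in> I" by (intro fa_monomial_map_qideal[OF p])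
  then have "cl (fa_monomial_map l p f) = cl (fa_monomial_map l p g)"
    unfolding fa_monomial_map_diff using cl_eq_iff fa_monomial_map_carrier[OF pp] f g by blast
  then show ?thesis using cl_carrier[OF f] unfolding monomial_aut_def g_def by simp
qed

lemma monomial_aut_extensional: "monomial_aut l p \<in> extensional (carrier OQ)"
  by (simp add: monomial_aut_def)

lemma monomial_aut_eqI:
  assumes "\<And>f. f \<in> fa_carrier n \<Longrightarrow> monomial_aut l p (cl f) = \<phi> (cl f)"
    and "\<phi> \<in> extensional (carrier OQ)"
  shows "monomial_aut l p = \<phi>"
proof
  fix A
  show "monomial_aut l p A = \<phi> A"
    using assms by (cases "A \<in> carrier OQ")
      (auto simp: Oq_carrier monomial_aut_def extensional_def)
qed

lemma monomial_aut_cong: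
  assumes p: "p \<in> Pq n q" and eq: "\<And>a. a < n \<Longrightarrow> l a = l' a"
  shows "monomial_aut l p = monomial_aut l' p"
  by (rule monomial_aut_eqI)
     (simp_all add: monomial_aut_extensional monomial_aut_cl[OF p]
        fa_monomial_map_cong[OF Pq_permutes[OF p] _ eq])

lemma monomial_aut_compose:
  assumes p: "p \<in> Pq n q" and s: "s \<in> Pq n q"
  shows "compose (carrier OQ) (monomial_aut l p) (monomial_aut m s)
    = monomial_aut (\<lambda>a. l a * m (inv_into UNIV p a)) (p \<circ> s)"
  by (rule monomial_aut_eqI[symmetric])
     (simp_all add: compose_def cl_carrier monomial_aut_cl p s Pq_compose
        fa_monomial_map_carrier[OF Pq_permutes[OF s]]
        fa_monomial_map_compose[OF Pq_permutes[OF p] Pq_permutes[OF s]])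

lemma monomial_aut_id: "monomial_aut (\<lambda>_. 1) id = (\<lambda>A\<in>carrier OQ. A)"
  by (rule monomial_aut_eqI) (simp_all add: cl_carrier monomial_aut_cl[OF Pq_id] fa_monomial_map_id)

lemma monomial_aut_var:
  "p \<in> Pq n q \<Longrightarrow> i < n \<Longrightarrow> monomial_aut l p (cl (fa_var i)) = cl (fa_monom [p i] (l (p i)))"
  by (simp add: monomial_aut_cl fa_var_carrier fa_monomial_map_var[OF Pq_permutes])

lemma monomial_aut_carrier: "p \<in> Pq n q \<Longrightarrow> A \<in> carrier OQ \<Longrightarrow> monomial_aut l p A \<in> carrier OQ"
  by (auto simp: Oq_carrier monomial_aut_cl fa_monomial_map_carrier Pq_def)

lemma monomial_aut_ring_hom:
  assumes p: "p \<in> Pq n q"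
  shows "monomial_aut l p \<in> ring_hom OQ OQ"
proof -
  have pp: "p permutes {..<n}" by (rule Pq_permutes[OF p])
  show ?thesis
  proof (rule ring_hom_memI)
    show "monomial_aut l p x \<in> carrier OQ" if "x \<in> carrier OQ" for x
      using monomial_aut_carrier[OF p that] .
    show "monomial_aut l p (x \<otimes>\<^bsub>OQ\<^esub> y) = monomial_aut l p x \<otimes>\<^bsub>OQ\<^esub> monomial_aut l p y"
      if "x \<in> carrier OQ" "y \<in> carrier OQ" for x y
      using that
      by (auto simp: Oq_carrier cl_mult monomial_aut_cl[OF p] fa_mult_carrier
          fa_monomial_map_carrier[OF pp] fa_monomial_map_mult)
    show "monomial_aut l p (x \<oplus>\<^bsub>OQ\<^esub> y) = monomial_aut l p x \<oplus>\<^bsub>OQ\<^esub> monomial_aut l p y"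
      if "x \<in> carrier OQ" "y \<in> carrier OQ" for x y
      using that
      by (auto simp: Oq_carrier cl_add monomial_aut_cl[OF p] fa_add_carrier
          fa_monomial_map_carrier[OF pp] fa_monomial_map_add)
    show "monomial_aut l p \<one>\<^bsub>OQ\<^esub> = \<one>\<^bsub>OQ\<^esub>"
      by (simp add: cl_one monomial_aut_cl[OF p] fa_const_carrier fa_monomial_map_const)
  qed
qed

lemma monomial_aut_inverse:
  assumes p: "p \<in> Pq n q" and l: "\<And>a. a < n \<Longrightarrow> l a \<noteq> 0"
  shows "compose (carrier OQ) (monomial_aut l p) (monomial_aut (\<lambda>a. inverse (l (p a))) (inv_into UNIV p))
      = (\<lambda>A\<in>carrier OQ. A)"
    and "compose (carrier OQ) (monomial_aut (\<lambda>a. inverse (l (p a))) (inv_into UNIV p)) (monomial_aut l p)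
      = (\<lambda>A\<in>carrier OQ. A)"
proof -
  have pp: "p permutes {..<n}" by (rule Pq_permutes[OF p])
  have ip: "inv_into UNIV p \<in> Pq n q" by (rule Pq_inv[OF p])
  have pn: "p a < n" if "a < n" for a using that permutes_in_image[OF pp] by simp
  have "monomial_aut (\<lambda>a. l a * inverse (l (p (inv_into UNIV p a)))) (p \<circ> inv_into UNIV p)
      = monomial_aut (\<lambda>_. 1) id"
    unfolding permutes_inv_o(1)[OF pp]
    by (rule monomial_aut_cong[OF Pq_id]) (simp add: permutes_inverses[OF pp] l pn)
  then show "compose (carrier OQ) (monomial_aut l p) (monomial_aut (\<lambda>a. inverse (l (p a))) (inv_into UNIV p))
      = (\<lambda>A\<in>carrier OQ. A)"
    by (simp add: monomial_aut_compose[OF p ip] monomial_aut_id)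
  have "monomial_aut (\<lambda>a. inverse (l (p a)) * l (inv_into UNIV (inv_into UNIV p) a)) (inv_into UNIV p \<circ> p)
      = monomial_aut (\<lambda>_. 1) id"
    unfolding permutes_inv_o(2)[OF pp]
    by (rule monomial_aut_cong[OF Pq_id])
       (simp add: permutes_inv_inv[OF pp] l pn)
  then show "compose (carrier OQ) (monomial_aut (\<lambda>a. inverse (l (p a))) (inv_into UNIV p)) (monomial_aut l p)
      = (\<lambda>A\<in>carrier OQ. A)"
    by (simp add: monomial_aut_compose[OF ip p] monomial_aut_id)
qed

lemma monomial_aut_in_Aut_gr:
  assumes p: "p \<in> Pq n q" and l_nonzero: "\<And>a. a < n \<Longrightarrow> l a \<noteq> 0"
  shows "monomial_aut l p \<in> Aut_gr_set n q"
proof -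
  have pp: "p permutes {..<n}" by (rule Pq_permutes[OF p])
  let ?\<psi> = "monomial_aut (\<lambda>a. inverse (l (p a))) (inv_into UNIV p)"
  have "bij_betw (monomial_aut l p) (carrier OQ) (carrier OQ)"
  proof (rule bij_betwI[where g="?\<psi>"])
    show "?\<psi> (monomial_aut l p A) = A" "monomial_aut l p (?\<psi> A) = A" if "A \<in> carrier OQ" for A
      using that fun_cong[OF monomial_aut_inverse(1)[of p l, OF p l_nonzero], where x=A]
        fun_cong[OF monomial_aut_inverse(2)[of p l, OF p l_nonzero], where x=A]
      by (auto simp: compose_def monomial_aut_carrier p Pq_inv)
  qed (auto simp: monomial_aut_carrier p Pq_inv)
  moreover have "monomial_aut l p (Oq_scalar n q c \<otimes>\<^bsub>OQ\<^esub> A)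
      = Oq_scalar n q c \<otimes>\<^bsub>OQ\<^esub> monomial_aut l p A" if "A \<in> carrier OQ" for c A
    using that
    by (auto simp: Oq_carrier Oq_scalar_mult monomial_aut_cl[OF p] fa_smult_carrier
        fa_monomial_map_carrier[OF pp] fa_monomial_map_smult)
  moreover have "monomial_aut l p ` Oq_hom n q d \<subseteq> Oq_hom n q d" for d
  proof
    fix B assume "B \<in> monomial_aut l p ` Oq_hom n q d"
    then obtain f where f: "f \<in> fa_carrier n" "\<And>w. f w \<noteq> 0 \<Longrightarrow> length w = d"
      "B = monomial_aut l p (cl f)"
      by (auto simp: Oq_hom_def FA_simps)
    have "fa_monomial_map l p f w \<noteq> 0 \<Longrightarrow> length w = d" for w
      using f(2)[of "map (inv_into UNIV p) w"] by (auto simp: fa_monomial_map_def)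
    then show "B \<in> Oq_hom n q d"
      using f fa_monomial_map_carrier[OF pp f(1)] by (auto simp: Oq_hom_def FA_simps monomial_aut_cl[OF p])
  qed
  ultimately show ?thesis
    unfolding Aut_gr_set_def ring_iso_def
    using monomial_aut_ring_hom[OF p] monomial_aut_extensional by auto
qed

lemma monomial_aut_inj:
  assumes p: "p \<in> Pq n q" and s: "s \<in> Pq n q" and l: "\<And>a. a < n \<Longrightarrow> l a \<noteq> 0"
    and eq: "monomial_aut l p = monomial_aut m s"
  shows "p = s" and "\<And>a. a < n \<Longrightarrow> l a = m a"
proof -
  have pp: "p permutes {..<n}" and ss: "s permutes {..<n}"
    using p s by (simp_all add: Pq_permutes)
  have *: "p i = s i \<and> l (p i) = m (s i)" if "i < n" for i
  proof -
    have "cl (fa_monom [p i] (l (p i))) = cl (fa_monom [s i] (m (s i)))"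
      using monomial_aut_var[OF p that, of l] monomial_aut_var[OF s that, of m] eq by simp
    moreover have "p i < n" "s i < n"
      using that permutes_in_image[OF pp] permutes_in_image[OF ss] by auto
    ultimately show ?thesis using cl_monom_linear_eq l by blast
  qed
  show "p = s"
  proof
    fix i show "p i = s i"
      using * permutes_not_in[OF pp] permutes_not_in[OF ss] by (cases "i < n") auto
  qed
  fix a assume a: "a < n"
  have "inv_into UNIV p a < n" using a permutes_in_image[OF permutes_inv[OF pp]] by auto
  then show "l a = m a" using *[of "inv_into UNIV p a"] by (simp add: permutes_inverses[OF pp])
qed

end

section \<open>Graded automorphisms are monomial\<close>

definition distinct_rows :: "nat \<Rightarrow> (nat \<Rightarrow> nat \<Rightarrow> 'k) \<Rightarrow> bool" where
  "distinct_rows n q \<longleftrightarrow> (\<forall>i<n. \<forall>j<n. i \<noteq> j \<longrightarrow> (\<exists>l<n. q i l \<noteq> q j l))"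

definition homog :: "(nat list \<Rightarrow> 'k::field) \<Rightarrow> nat \<Rightarrow> bool" where
  "homog f d = (\<forall>w. f w \<noteq> 0 \<longrightarrow> length w = d)"

lemma homog_var: "homog (fa_var i) 1"
  by (simp add: homog_def fa_var_def)

lemma fa_mult_linear:
  assumes "homog f 1" "homog g 1"
  shows "fa_mult f g [a, b] = f [a] * g [b]"
proof -
  have "f [] = 0" "f [a, b] = 0" "g [] = 0"
    using assms unfolding homog_def by (metis list.size(3) zero_neq_one, auto)
  then show ?thesis by (simp add: fa_mult_Cons fa_mult_Nil)
qed

lemma homog1_eqI:
  assumes "homog f 1" "homog g 1" "\<And>a. f [a] = g [a]"
  shows "f = g"
proof
  fix w
  show "f w = g w"
  proof (cases "length w = 1")
    case True
    then obtain a where "w = [a]" by (cases w) auto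
    then show ?thesis using assms(3) by simp
  next
    case False
    then show ?thesis using assms(1,2) unfolding homog_def by metis
  qed
qed

context qaffine
begin

lemma Oq_hom_iff: "A \<in> Oq_hom n q d \<longleftrightarrow> (\<exists>f. f \<in> fa_carrier n \<and> homog f d \<and> A = cl f)"
  by (auto simp: Oq_hom_def homog_def FA_simps)

lemma cl_monom_Nil: "cl (fa_monom [] c) = Oq_scalar n q c \<otimes>\<^bsub>OQ\<^esub> \<one>\<^bsub>OQ\<^esub>"
  using monoid.r_one[OF ring.is_monoid[OF ring_Oq] Oq_scalar_carrier]
  by (simp add: fa_monom_Nil Oq_scalar_def)

lemma cl_monom_Cons:
  "a < n \<Longrightarrow> set w \<subseteq> {..<n} \<Longrightarrow>
    cl (fa_monom (a # w) c) = cl (fa_var a) \<otimes>\<^bsub>OQ\<^esub> cl (fa_monom w c)"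
  by (simp add: cl_mult fa_var_carrier fa_monom_carrier fa_var_monom fa_mult_monom)

lemma hom_eq_on_vars:
  assumes h1: "\<phi> \<in> ring_hom OQ OQ" and h2: "\<psi> \<in> ring_hom OQ OQ"
    and lin1: "\<And>c A. A \<in> carrier OQ \<Longrightarrow> \<phi> (Oq_scalar n q c \<otimes>\<^bsub>OQ\<^esub> A) = Oq_scalar n q c \<otimes>\<^bsub>OQ\<^esub> \<phi> A"
    and lin2: "\<And>c A. A \<in> carrier OQ \<Longrightarrow> \<psi> (Oq_scalar n q c \<otimes>\<^bsub>OQ\<^esub> A) = Oq_scalar n q c \<otimes>\<^bsub>OQ\<^esub> \<psi> A"
    and vars: "\<And>a. a < n \<Longrightarrow> \<phi> (cl (fa_var a)) = \<psi> (cl (fa_var a))"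
    and A: "A \<in> carrier OQ"
  shows "\<phi> A = \<psi> A"
proof -
  have monom_eq: "\<phi> (cl (fa_monom w c)) = \<psi> (cl (fa_monom w c))" if "set w \<subseteq> {..<n}" for w c
    using that
  proof (induction w)
    case Nil
    then show ?case
      using lin1[of "\<one>\<^bsub>OQ\<^esub>" c] lin2[of "\<one>\<^bsub>OQ\<^esub>" c] ring_hom_one[OF h1] ring_hom_one[OF h2]
      by (simp add: cl_monom_Nil ring.ring_simprules(6)[OF ring_Oq])
  next
    case (Cons a w)
    then show ?case
      using ring_hom_mult[OF h1] ring_hom_mult[OF h2] vars[of a]
      by (simp add: cl_monom_Cons cl_carrier fa_var_carrier fa_monom_carrier)
  qed
  obtain f where f: "f \<in> fa_carrier n" "A = cl f" using A by (auto simp: Oq_carrier)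
  have "\<forall>w. f w \<noteq> 0 \<longrightarrow> True" by simp
  with f(1) have "\<phi> (cl f) = \<psi> (cl f)"
  proof (induction rule: fa_carrier_induct)
    case zero
    show ?case by (simp add: cl_zero ring_hom_zero[OF h1 ring_Oq ring_Oq] ring_hom_zero[OF h2 ring_Oq ring_Oq])
  next
    case (monom w c)
    then show ?case using monom_eq by blast
  next
    case (add g h)
    then show ?case
      using ring_hom_add[OF h1] ring_hom_add[OF h2] by (simp add: cl_add[symmetric] cl_carrier)
  qed
  then show ?thesis using f by simp
qed

text \<open>\<open>x\<^sub>i A = var_twist i A x\<^sub>i\<close> for linear \<open>A\<close>: each generator is normal.\<close>

definition var_twist :: "nat \<Rightarrow> (nat list \<Rightarrow> 'k) \<Rightarrow> nat list \<Rightarrow> 'k" where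
  "var_twist i f = (\<lambda>w. if length w = 1 then q (hd w) i * f w else 0)"

lemma var_twist_carrier: "f \<in> fa_carrier n \<Longrightarrow> var_twist i f \<in> fa_carrier n"
  unfolding fa_carrier_def var_twist_def by (auto intro: finite_subset[of _ "{w. f w \<noteq> 0}"])

lemma var_twist_homog: "homog (var_twist i f) 1"
  by (simp add: homog_def var_twist_def)

lemma var_twist_rel_in_qideal:
  assumes "f \<in> fa_carrier n" "\<forall>w. f w \<noteq> 0 \<longrightarrow> length w = 1" and i: "i < n"
  shows "(\<lambda>w. fa_mult (fa_var i) f w - fa_mult (var_twist i f) (fa_var i) w) \<in> I"
  using assms(1,2)
proof (induction rule: fa_carrier_induct)
  case zero
  have "var_twist i (\<lambda>_. 0) = (\<lambda>_. 0)" by (simp add: var_twist_def fun_eq_iff)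
  then show ?case by (simp add: fa_mult_def qideal_zero)
next
  case (monom u c)
  then obtain m where u: "u = [m]" "m < n" by (cases u) auto
  have twist: "var_twist i (fa_monom [m] c) = fa_monom [m] (q m i * c)"
    by (auto simp: var_twist_def fa_monom_def)
  have "fa_monom [i, m] (1 * c) = (\<lambda>w. c * fa_monom [i, m] 1 w)"
    "fa_monom [m, i] (q m i * c * 1) = (\<lambda>w. q m i * c * fa_monom [m, i] 1 w)"
    by (auto simp: fa_monom_def)
  then have "(\<lambda>w. fa_mult (fa_var i) (fa_monom u c) w - fa_mult (var_twist i (fa_monom u c)) (fa_var i) w)
      = (\<lambda>w. c * qrel q m i w)"
    unfolding u(1) twist fa_var_monom fa_mult_monom qrel_eq
    by (simp only: append.simps) (simp add: algebra_simps)
  then show ?case using qideal_smult qrel_in_qideal[OF u(2) i] by simp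
next
  case (add g h)
  have "var_twist i (\<lambda>w. g w + h w) = (\<lambda>w. var_twist i g w + var_twist i h w)"
    by (auto simp: var_twist_def algebra_simps)
  then show ?case
    using qideal_add[OF add.IH] by (simp add: fa_mult_ldistr fa_mult_rdistr algebra_simps)
qed

lemma var_twist_commute:
  assumes f: "f \<in> fa_carrier n" "homog f 1" and i: "i < n"
  shows "cl (fa_var i) \<otimes>\<^bsub>OQ\<^esub> cl f = cl (var_twist i f) \<otimes>\<^bsub>OQ\<^esub> cl (fa_var i)"
  using var_twist_rel_in_qideal[OF f(1) _ i] f cl_eq_iff
  by (simp add: homog_def cl_mult fa_var_carrier[OF i] var_twist_carrier fa_mult_carrier)

lemma normal_linear_column:
  assumes z: "homog z 1" and v: "homog v 1" and l: "l < n"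
    and coeff: "\<And>M. ord_coeff q M (fa_mult z (fa_var l)) = ord_coeff q M (fa_mult v z)"
    and x: "x < n" "z [x] \<noteq> 0"
  shows "q l x = v [l]"
proof -
  have zl: "fa_mult z (fa_var l) [y, y'] = (if y' = l then z [y] else 0)" for y y'
    using fa_mult_linear[OF z homog_var] by (simp add: fa_var_def)
  have vz: "fa_mult v z [y, y'] = v [y] * z [y']" for y y'
    using fa_mult_linear[OF v z] .
  have square: "(if y = l then z [y] else 0) = v [y] * z [y]" for y
    using coeff[of "{#y, y#}"] by (simp add: ord_coeff_square zl vz)
  show ?thesis
  proof (cases "x = l")
    case True
    then show ?thesis using square[of l] x q_diag[OF l] by simp
  next
    case False
    have "v [x] = 0" using square[of x] x False by simp
    then have "z [x] * swap_factor q x l = v [l] * z [x] * swap_factor q l x"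
      using coeff[of "{#x, l#}"] False by (simp add: ord_coeff_pair zl vz)
    then have "q l x * swap_factor q l x = v [l] * swap_factor q l x"
      using x(2) swap_factor_commute[OF l x(1)] by (simp add: algebra_simps)
    then show ?thesis using swap_factor_nonzero[OF l x(1)] by simp
  qed
qed

text \<open>The normality \<open>z x\<^sub>l = v z\<close> in \<open>\<O>\<^sub>q\<close> enters only through ordered-monomial coefficients.\<close>

lemma normal_linear_support:
  assumes rows: "distinct_rows n q"
    and z: "z \<in> fa_carrier n" "homog z 1"
    and normal: "\<forall>l<n. \<exists>v. homog v 1 \<and>
      (\<forall>M. ord_coeff q M (fa_mult z (fa_var l)) = ord_coeff q M (fa_mult v z))"
    and a: "z [a] \<noteq> 0" and b: "z [b] \<noteq> 0"
  shows "a = b"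
proof -
  have an: "a < n" and bn: "b < n" using z(1) a b by (auto simp: fa_carrier_def)
  have "q a l = q b l" if l: "l < n" for l
  proof -
    obtain v where v: "homog v 1"
      and coeff: "\<And>M. ord_coeff q M (fa_mult z (fa_var l)) = ord_coeff q M (fa_mult v z)"
      using normal l by blast
    have "q a l * q l a = q b l * q l a"
      using q_inverse[OF an l] q_inverse[OF bn l] normal_linear_column[OF z(2) v l coeff]
        an a bn b by simp
    then show ?thesis using q_nonzero[OF l an] by simp
  qed
  then show "a = b" using rows an bn unfolding distinct_rows_def by blast
qed

end

locale graded_aut = qaffine n q for n and q :: "nat \<Rightarrow> nat \<Rightarrow> 'k::field" +
  fixes \<phi>
  assumes aut: "\<phi> \<in> Aut_gr_set n q"
begin

lemma aut_ring_hom: "\<phi> \<in> ring_hom OQ OQ"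
  and aut_bij: "bij_betw \<phi> (carrier OQ) (carrier OQ)"
  and aut_smult: "\<And>c A. A \<in> carrier OQ \<Longrightarrow> \<phi> (Oq_scalar n q c \<otimes>\<^bsub>OQ\<^esub> A) = Oq_scalar n q c \<otimes>\<^bsub>OQ\<^esub> \<phi> A"
  and aut_graded: "\<And>d. \<phi> ` Oq_hom n q d \<subseteq> Oq_hom n q d"
  and aut_extensional: "\<phi> \<in> extensional (carrier OQ)"
  using aut by (auto simp: Aut_gr_set_def ring_iso_def)

lemma aut_homog:
  assumes "f \<in> fa_carrier n" "homog f d"
  obtains g where "g \<in> fa_carrier n" "homog g d" "\<phi> (cl f) = cl g"
proof -
  have "cl f \<in> Oq_hom n q d" using assms by (auto simp: Oq_hom_iff)
  then have "\<phi> (cl f) \<in> Oq_hom n q d" using aut_graded by blast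
  then show ?thesis using that by (auto simp: Oq_hom_iff)
qed

lemma aut_add: "f \<in> fa_carrier n \<Longrightarrow> g \<in> fa_carrier n \<Longrightarrow>
    \<phi> (cl (\<lambda>w. f w + g w)) = \<phi> (cl f) \<oplus>\<^bsub>OQ\<^esub> \<phi> (cl g)"
  using ring_hom_add[OF aut_ring_hom] by (simp add: cl_add[symmetric] cl_carrier)

lemma aut_mult: "f \<in> fa_carrier n \<Longrightarrow> g \<in> fa_carrier n \<Longrightarrow>
    \<phi> (cl (fa_mult f g)) = \<phi> (cl f) \<otimes>\<^bsub>OQ\<^esub> \<phi> (cl g)"
  using ring_hom_mult[OF aut_ring_hom] by (simp add: cl_mult[symmetric] cl_carrier)

lemma aut_no_linear_part:
  assumes "f \<in> fa_carrier n" "\<forall>w. f w \<noteq> 0 \<longrightarrow> length w \<noteq> 1"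
  shows "\<exists>g. g \<in> fa_carrier n \<and> \<phi> (cl f) = cl g \<and> (\<forall>w. length w = 1 \<longrightarrow> g w = 0)"
  using assms
proof (induction rule: fa_carrier_induct)
  case zero
  show ?case
    by (rule exI[of _ "\<lambda>_. 0"]) (simp add: fa_zero_carrier cl_zero ring_hom_zero[OF aut_ring_hom ring_Oq ring_Oq])
next
  case (monom w c)
  have "homog (fa_monom w c) (length w)" by (simp add: homog_def fa_monom_def)
  then obtain g where g: "g \<in> fa_carrier n" "homog g (length w)" "\<phi> (cl (fa_monom w c)) = cl g"
    using aut_homog fa_monom_carrier[OF monom(1)] by blast
  moreover have "\<forall>u. length u = 1 \<longrightarrow> g u = 0" using g(2) monom(2) unfolding homog_def by metis
  ultimately show ?case by blast
next
  case (add f1 f2)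
  then obtain g1 g2 where g: "g1 \<in> fa_carrier n" "\<phi> (cl f1) = cl g1" "\<forall>w. length w = 1 \<longrightarrow> g1 w = 0"
    "g2 \<in> fa_carrier n" "\<phi> (cl f2) = cl g2" "\<forall>w. length w = 1 \<longrightarrow> g2 w = 0"
    by blast
  show ?case
    by (rule exI[of _ "\<lambda>w. g1 w + g2 w"]) (simp add: g aut_add[OF add(1,2)] cl_add fa_add_carrier)
qed

lemma aut_linear_preimage:
  assumes l: "l < n"
  obtains b where "b \<in> fa_carrier n" "homog b 1" "\<phi> (cl b) = cl (fa_var l)"
proof -
  have "cl (fa_var l) \<in> \<phi> ` carrier OQ"
    using aut_bij cl_carrier[OF fa_var_carrier[OF l]] by (simp add: bij_betw_def)
  then obtain f where f: "f \<in> fa_carrier n" "\<phi> (cl f) = cl (fa_var l)"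
    by (auto simp: Oq_carrier)
  define f1 where "f1 = (\<lambda>w. if length w = 1 then f w else 0)"
  define fr where "fr = (\<lambda>w. if length w \<noteq> 1 then f w else 0)"
  have f1: "f1 \<in> fa_carrier n" "homog f1 1" and fr: "fr \<in> fa_carrier n"
    using f(1) by (simp_all add: f1_def fr_def homog_def fa_carrier_restrict)
  obtain g1 where g1: "g1 \<in> fa_carrier n" "homog g1 1" "\<phi> (cl f1) = cl g1"
    by (rule aut_homog[OF f1])
  have "\<forall>w. fr w \<noteq> 0 \<longrightarrow> length w \<noteq> 1" by (simp add: fr_def)
  then obtain gr where gr: "gr \<in> fa_carrier n" "\<phi> (cl fr) = cl gr" "\<forall>w. length w = 1 \<longrightarrow> gr w = 0"
    using aut_no_linear_part[OF fr] by blast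
  have "f = (\<lambda>w. f1 w + fr w)" by (auto simp: f1_def fr_def)
  then have "cl (fa_var l) = \<phi> (cl (\<lambda>w. f1 w + fr w))" using f(2) by simp
  also have "\<dots> = \<phi> (cl f1) \<oplus>\<^bsub>OQ\<^esub> \<phi> (cl fr)" by (rule aut_add[OF f1(1) fr])
  also have "\<dots> = cl (\<lambda>w. g1 w + gr w)" by (simp only: g1(3) gr(2) cl_add g1(1) gr(1))
  finally have "cl (fa_var l) = cl (\<lambda>w. g1 w + gr w)" .
  then have "ord_coeff q {#a#} (fa_var l) = ord_coeff q {#a#} (\<lambda>w. g1 w + gr w)" for a
    using fa_var_carrier[OF l] fa_add_carrier[OF g1(1) gr(1)] by (rule ord_coeff_cl_eq[rotated 2])
  then have "g1 [a] = fa_var l [a]" for a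
    using gr(3) by (simp add: ord_coeff_singleton)
  then have "g1 = fa_var l"
    by (rule homog1_eqI[OF g1(2) homog_var])
  with g1(3) show ?thesis using that[OF f1] by simp
qed

lemma aut_var_image_normal:
  assumes i: "i < n" and l: "l < n" and g: "g \<in> fa_carrier n" "\<phi> (cl (fa_var i)) = cl g"
  shows "\<exists>v. homog v 1 \<and> (\<forall>M. ord_coeff q M (fa_mult g (fa_var l)) = ord_coeff q M (fa_mult v g))"
proof -
  obtain b where b: "b \<in> fa_carrier n" "homog b 1" "\<phi> (cl b) = cl (fa_var l)"
    using aut_linear_preimage[OF l] by blast
  obtain v where v: "v \<in> fa_carrier n" "homog v 1" "\<phi> (cl (var_twist i b)) = cl v"
    using aut_homog[OF var_twist_carrier[OF b(1)] var_twist_homog] by blast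
  have "\<phi> (cl (fa_var i) \<otimes>\<^bsub>OQ\<^esub> cl b) = \<phi> (cl (var_twist i b) \<otimes>\<^bsub>OQ\<^esub> cl (fa_var i))"
    using var_twist_commute[OF b(1,2) i] by simp
  then have "cl (fa_mult g (fa_var l)) = cl (fa_mult v g)"
    using aut_mult[OF fa_var_carrier[OF i] b(1)] aut_mult[OF var_twist_carrier[OF b(1)] fa_var_carrier[OF i]]
      b v g by (simp add: cl_mult fa_var_carrier i l var_twist_carrier)
  then have "ord_coeff q M (fa_mult g (fa_var l)) = ord_coeff q M (fa_mult v g)" for M
    by (intro ord_coeff_cl_eq fa_mult_carrier g(1) v(1) fa_var_carrier[OF l])
  then show ?thesis using v by blast
qed

lemma aut_var_image:
  assumes rows: "distinct_rows n q"
    and i: "i < n"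
  obtains a c where "a < n" "c \<noteq> 0" "\<phi> (cl (fa_var i)) = cl (fa_monom [a] c)"
proof -
  obtain g where g: "g \<in> fa_carrier n" "homog g 1" "\<phi> (cl (fa_var i)) = cl g"
    using aut_homog[OF fa_var_carrier[OF i] homog_var] by blast
  have "g \<noteq> (\<lambda>_. 0)"
  proof
    assume "g = (\<lambda>_. 0)"
    then have "\<phi> (cl (fa_var i)) = \<phi> \<zero>\<^bsub>OQ\<^esub>"
      using g(3) by (simp add: cl_zero ring_hom_zero[OF aut_ring_hom ring_Oq ring_Oq])
    then have "cl (fa_var i) = cl (\<lambda>_. 0)"
      using aut_bij cl_carrier[OF fa_var_carrier[OF i]] ring.ring_simprules(2)[OF ring_Oq]
      by (simp add: bij_betw_def inj_on_def cl_zero)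
    then have "ord_coeff q {#i#} (fa_var i) = ord_coeff q {#i#} (\<lambda>_. 0)"
      by (intro ord_coeff_cl_eq fa_var_carrier i fa_zero_carrier)
    then show False by (simp add: ord_coeff_singleton fa_var_def)
  qed
  then obtain a where a: "g [a] \<noteq> 0"
    using homog1_eqI[OF g(2), of "\<lambda>_. 0"] by (auto simp: homog_def)
  have normal: "\<forall>l<n. \<exists>v. homog v 1 \<and>
      (\<forall>M. ord_coeff q M (fa_mult g (fa_var l)) = ord_coeff q M (fa_mult v g))"
    using aut_var_image_normal[OF i _ g(1,3)] by blast
  have "g [b] = fa_monom [a] (g [a]) [b]" for b
  proof (cases "g [b] = 0")
    case False
    have "b = a"
      by (rule normal_linear_support[OF rows g(1,2) normal False a])
    then show ?thesis by (simp add: fa_monom_def)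
  qed (auto simp: fa_monom_def)
  then have "g = fa_monom [a] (g [a])"
    by (rule homog1_eqI[OF g(2), rotated]) (simp add: homog_def fa_monom_def)
  moreover have "a < n" using g(1) a by (auto simp: fa_carrier_def)
  ultimately show ?thesis using that g(3) a by metis
qed

lemma aut_monom_linear:
  assumes a: "a < n" and i: "i < n" and \<phi>i: "\<phi> (cl (fa_var i)) = cl (fa_monom [a] c)"
  shows "\<phi> (cl (fa_monom [i] d)) = cl (fa_monom [a] (d * c))"
proof -
  have "cl (fa_monom [i] d) = Oq_scalar n q d \<otimes>\<^bsub>OQ\<^esub> cl (fa_var i)"
    using Oq_scalar_mult[OF fa_var_carrier[OF i], of d] by (simp add: fa_var_monom fa_smult_monom)
  then have "\<phi> (cl (fa_monom [i] d)) = Oq_scalar n q d \<otimes>\<^bsub>OQ\<^esub> cl (fa_monom [a] c)"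
    using aut_smult[OF cl_carrier[OF fa_var_carrier[OF i]]] \<phi>i by simp
  also have "\<dots> = cl (fa_monom [a] (d * c))"
    using Oq_scalar_mult[OF fa_monom_carrier, of "[a]" d c] a by (simp add: fa_smult_monom)
  finally show ?thesis .
qed

lemma aut_var_images_q:
  assumes i: "i < n" and j: "j < n" and a: "a < n" and b: "b < n"
    and \<phi>i: "\<phi> (cl (fa_var i)) = cl (fa_monom [a] c)" and \<phi>j: "\<phi> (cl (fa_var j)) = cl (fa_monom [b] d)"
    and cd: "c \<noteq> 0" "d \<noteq> 0"
  shows "q a b = q i j"
proof -
  have mult: "\<phi> (cl (fa_monom [x, y] 1)) = cl (fa_monom [x', y'] (e * e'))"
    if "x < n" "y < n" "x' < n" "y' < n"
      "\<phi> (cl (fa_var x)) = cl (fa_monom [x'] e)" "\<phi> (cl (fa_var y)) = cl (fa_monom [y'] e')"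
    for x y x' y' e e'
    using that aut_mult[of "fa_var x" "fa_var y"]
    by (simp add: fa_var_carrier cl_mult fa_monom_carrier fa_mult_monom fa_var_monom)
  have "cl (fa_monom [j, i] 1) = cl (\<lambda>w. q i j * fa_monom [i, j] 1 w)"
    using qrel_in_qideal[OF i j] cl_eq_iff i j
    by (simp add: qrel_eq fa_monom_carrier fa_smult_carrier)
  also have "\<dots> = Oq_scalar n q (q i j) \<otimes>\<^bsub>OQ\<^esub> cl (fa_monom [i, j] 1)"
    using i j by (simp add: Oq_scalar_mult fa_monom_carrier)
  finally have "\<phi> (cl (fa_monom [j, i] 1)) = Oq_scalar n q (q i j) \<otimes>\<^bsub>OQ\<^esub> \<phi> (cl (fa_monom [i, j] 1))"
    using aut_smult i j by (simp add: cl_carrier fa_monom_carrier)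
  then have "cl (fa_monom [b, a] (d * c)) = cl (fa_monom [a, b] (q i j * (c * d)))"
    using mult[OF j i b a \<phi>j \<phi>i] mult[OF i j a b \<phi>i \<phi>j] a b
    by (simp add: Oq_scalar_mult fa_monom_carrier fa_smult_monom)
  then have "ord_coeff q {#a, b#} (fa_monom [b, a] (d * c))
      = ord_coeff q {#a, b#} (fa_monom [a, b] (q i j * (c * d)))"
    using a b by (intro ord_coeff_cl_eq fa_monom_carrier) auto
  then have "q a b * swap_factor q a b * (c * d) = q i j * swap_factor q a b * (c * d)"
    using swap_factor_commute[OF a b] by (simp add: ord_coeff_monom add_mset_commute algebra_simps)
  then show ?thesis using swap_factor_nonzero[OF a b] cd by simp
qed

end

lemma permutes_extend_inj_on:
  fixes n :: nat
  assumes "inj_on f {..<n}" "f ` {..<n} \<subseteq> {..<n}"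
  obtains p where "p permutes {..<n}" "\<And>i. i < n \<Longrightarrow> p i = f i"
proof -
  define p where "p = (\<lambda>x. if x < n then f x else x)"
  have inj: "inj_on p {..<n}" and sub: "p ` {..<n} \<subseteq> {..<n}"
    using assms unfolding p_def inj_on_def by auto
  have "p ` {..<n} = {..<n}" by (rule endo_inj_surj[OF finite_lessThan sub inj])
  with inj have "bij_betw p {..<n} {..<n}" by (simp add: bij_betw_def)
  then have "p permutes {..<n}" by (rule bij_imp_permutes) (simp add: p_def)
  then show ?thesis using that by (simp add: p_def)
qed

context graded_aut
begin

lemma aut_var_perm:
  assumes rows: "distinct_rows n q"
  obtains p \<gamma> where "p \<in> Pq n q"
    "\<And>i. i < n \<Longrightarrow> \<gamma> i \<noteq> 0 \<and> \<phi> (cl (fa_var i)) = cl (fa_monom [p i] (\<gamma> i))"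
proof -
  have "\<forall>i\<in>{..<n}. \<exists>ac. fst ac < n \<and> snd ac \<noteq> 0 \<and>
      \<phi> (cl (fa_var i)) = cl (fa_monom [fst ac] (snd ac))"
  proof
    fix i assume "i \<in> {..<n}"
    then obtain a c where "a < n" "c \<noteq> 0" "\<phi> (cl (fa_var i)) = cl (fa_monom [a] c)"
      using aut_var_image[OF rows, of i] by auto
    then show "\<exists>ac. fst ac < n \<and> snd ac \<noteq> 0 \<and> \<phi> (cl (fa_var i)) = cl (fa_monom [fst ac] (snd ac))"
      by (intro exI[of _ "(a, c)"]) simp
  qed
  from bchoice[OF this] obtain f where f: "\<forall>i\<in>{..<n}. fst (f i) < n \<and> snd (f i) \<noteq> 0 \<and>
      \<phi> (cl (fa_var i)) = cl (fa_monom [fst (f i)] (snd (f i)))"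
    by blast
  define \<alpha> where "\<alpha> = fst \<circ> f"
  define \<gamma> where "\<gamma> = snd \<circ> f"
  have \<alpha>\<gamma>: "\<And>i. i < n \<Longrightarrow> \<alpha> i < n \<and> \<gamma> i \<noteq> 0 \<and> \<phi> (cl (fa_var i)) = cl (fa_monom [\<alpha> i] (\<gamma> i))"
    using f by (simp add: \<alpha>_def \<gamma>_def)
  have "inj_on \<alpha> {..<n}"
  proof
    fix i j assume "i \<in> {..<n}" "j \<in> {..<n}" and eq: "\<alpha> i = \<alpha> j"
    then have i: "i < n" and j: "j < n" by simp_all
    have "\<phi> (cl (fa_monom [i] (\<gamma> j))) = cl (fa_monom [\<alpha> i] (\<gamma> j * \<gamma> i))"
      using \<alpha>\<gamma>[OF i] by (intro aut_monom_linear i) simp_all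
    also have "\<dots> = \<phi> (cl (fa_monom [j] (\<gamma> i)))"
      using \<alpha>\<gamma>[OF j] eq aut_monom_linear[OF _ j, of "\<alpha> j" "\<gamma> j" "\<gamma> i"] by (simp add: mult.commute)
    finally have "cl (fa_monom [i] (\<gamma> j)) = cl (fa_monom [j] (\<gamma> i))"
      using inj_onD[OF bij_betw_imp_inj_on[OF aut_bij]] i j by (simp add: cl_carrier fa_monom_carrier)
    then show "i = j" using cl_monom_linear_eq[OF i j] \<alpha>\<gamma>[OF j] by blast
  qed
  moreover have "\<alpha> ` {..<n} \<subseteq> {..<n}" using \<alpha>\<gamma> by auto
  ultimately obtain p where p: "p permutes {..<n}" "\<And>i. i < n \<Longrightarrow> p i = \<alpha> i"
    using permutes_extend_inj_on by blast
  have "q (p i) (p j) = q i j" if "i < n" "j < n" for i j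
    using aut_var_images_q[of i j "\<alpha> i" "\<alpha> j" "\<gamma> i" "\<gamma> j"] \<alpha>\<gamma> that p(2) by simp
  then have "p \<in> Pq n q" using p(1) by (simp add: Pq_def)
  then show ?thesis by (rule that[where \<gamma>=\<gamma>]) (simp add: \<alpha>\<gamma> p(2))
qed

lemma aut_eq_monomial_aut:
  assumes rows: "distinct_rows n q"
  obtains l p where "l \<in> {..<n} \<rightarrow>\<^sub>E (UNIV - {0})" "p \<in> Pq n q" "monomial_aut l p = \<phi>"
proof -
  obtain p \<gamma> where p: "p \<in> Pq n q"
    and \<gamma>: "\<And>i. i < n \<Longrightarrow> \<gamma> i \<noteq> 0 \<and> \<phi> (cl (fa_var i)) = cl (fa_monom [p i] (\<gamma> i))"
    using aut_var_perm[OF rows] by blast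
  have pp: "p permutes {..<n}" by (rule Pq_permutes[OF p])
  define l where "l = (\<lambda>a\<in>{..<n}. \<gamma> (inv_into UNIV p a))"
  have l_p: "l (p i) = \<gamma> i" if "i < n" for i
    using that permutes_in_image[OF pp] by (simp add: l_def permutes_inverses[OF pp])
  have l: "l \<in> {..<n} \<rightarrow>\<^sub>E (UNIV - {0})"
    using \<gamma> permutes_in_image[OF permutes_inv[OF pp]] by (auto simp: l_def)
  have "monomial_aut l p = \<phi>"
  proof (rule monomial_aut_eqI[OF _ aut_extensional])
    fix f :: "nat list \<Rightarrow> 'k" assume f: "f \<in> fa_carrier n"
    show "monomial_aut l p (cl f) = \<phi> (cl f)"
    proof (rule hom_eq_on_vars[OF monomial_aut_ring_hom[OF p] aut_ring_hom _ aut_smult])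
      show "monomial_aut l p (Oq_scalar n q c \<otimes>\<^bsub>OQ\<^esub> A) = Oq_scalar n q c \<otimes>\<^bsub>OQ\<^esub> monomial_aut l p A"
        if "A \<in> carrier OQ" for c A
        using monomial_aut_in_Aut_gr[OF p] l that by (auto simp: Aut_gr_set_def)
      show "monomial_aut l p (cl (fa_var a)) = \<phi> (cl (fa_var a))" if "a < n" for a
        using monomial_aut_var[OF p that] \<gamma>[OF that] l_p[OF that] by simp
    qed (simp_all add: cl_carrier f)
  qed
  then show ?thesis using that l p by blast
qed

end

section \<open>The isomorphism with the semidirect product\<close>

lemma iso_sym_closed:
  assumes h: "h \<in> iso G H"
    and closed: "\<And>x y. x \<in> carrier G \<Longrightarrow> y \<in> carrier G \<Longrightarrow> x \<otimes>\<^bsub>G\<^esub> y \<in> carrier G"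
  shows "H \<cong> G"
proof -
  have bij: "bij_betw h (carrier G) (carrier H)" and hom: "h \<in> hom G H"
    using h by (auto simp: iso_def)
  let ?g = "inv_into (carrier G) h"
  have g: "bij_betw ?g (carrier H) (carrier G)" by (rule bij_betw_inv_into[OF bij])
  have "?g (x \<otimes>\<^bsub>H\<^esub> y) = ?g x \<otimes>\<^bsub>G\<^esub> ?g y" if "x \<in> carrier H" "y \<in> carrier H" for x y
  proof (rule inv_into_f_eq)
    show "inj_on h (carrier G)" using bij by (simp add: bij_betw_def)
    show "?g x \<otimes>\<^bsub>G\<^esub> ?g y \<in> carrier G"
      using that g closed by (meson bij_betwE)
    show "h (?g x \<otimes>\<^bsub>G\<^esub> ?g y) = x \<otimes>\<^bsub>H\<^esub> y"
      using that g hom bij_betw_inv_into_right[OF bij] by (simp add: hom_def bij_betwE)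
  qed
  then have "?g \<in> iso H G"
    using g by (auto simp: iso_def hom_def bij_betwE)
  then show ?thesis by (rule is_isoI)
qed

context qaffine
begin

lemma semidirect_mult_closed:
  assumes x: "x \<in> carrier (semidirect n q)" and y: "y \<in> carrier (semidirect n q)"
  shows "x \<otimes>\<^bsub>semidirect n q\<^esub> y \<in> carrier (semidirect n q)"
proof -
  obtain l p m s where xy: "x = (l, p)" "y = (m, s)" "l \<in> {..<n} \<rightarrow>\<^sub>E (UNIV - {0})" "p \<in> Pq n q"
    "m \<in> {..<n} \<rightarrow>\<^sub>E (UNIV - {0})" "s \<in> Pq n q"
    using x y by (auto simp: semidirect_def)
  have pp: "p permutes {..<n}" by (rule Pq_permutes[OF xy(4)])
  have "perm_act n p m i \<noteq> 0" if "i < n" for i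
  proof -
    have "inv_into {..<n} p i = inv_into UNIV p i"
      using that permutes_inv_eq[OF pp] permutes_inverses[OF pp] permutes_inj_on[OF pp]
        permutes_in_image[OF permutes_inv[OF pp]]
      by (intro inv_into_f_eq) auto
    then show ?thesis
      using that xy(5) permutes_in_image[OF permutes_inv[OF pp]] by (auto simp: perm_act_def)
  qed
  then show ?thesis using xy Pq_compose by (auto simp: semidirect_def)
qed

lemma monomial_aut_semidirect_hom:
  "case_prod monomial_aut \<in> hom (semidirect n q) (Aut_gr n q)"
proof (rule homI)
  fix x assume "x \<in> carrier (semidirect n q)"
  then show "case_prod monomial_aut x \<in> carrier (Aut_gr n q)"
    by (auto simp: semidirect_def Aut_gr_def intro!: monomial_aut_in_Aut_gr)
next
  fix x y assume "x \<in> carrier (semidirect n q)" "y \<in> carrier (semidirect n q)"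
  then obtain l p m s where xy: "x = (l, p)" "y = (m, s)" "p \<in> Pq n q" "s \<in> Pq n q"
    by (auto simp: semidirect_def)
  have pp: "p permutes {..<n}" by (rule Pq_permutes[OF xy(3)])
  have "monomial_aut (\<lambda>i\<in>{..<n}. l i * perm_act n p m i) (p \<circ> s)
      = monomial_aut (\<lambda>a. l a * m (inv_into UNIV p a)) (p \<circ> s)"
  proof (rule monomial_aut_cong[OF Pq_compose[OF xy(3,4)]])
    fix a assume "a < n"
    then have "inv_into {..<n} p a = inv_into UNIV p a"
      using permutes_inverses[OF pp] permutes_inj_on[OF pp] permutes_in_image[OF permutes_inv[OF pp]]
      by (intro inv_into_f_eq) auto
    then show "(\<lambda>i\<in>{..<n}. l i * perm_act n p m i) a = l a * m (inv_into UNIV p a)"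
      using \<open>a < n\<close> by (simp add: perm_act_def)
  qed
  then show "case_prod monomial_aut (x \<otimes>\<^bsub>semidirect n q\<^esub> y)
      = case_prod monomial_aut x \<otimes>\<^bsub>Aut_gr n q\<^esub> case_prod monomial_aut y"
    by (simp add: xy semidirect_def Aut_gr_def monomial_aut_compose[OF xy(3,4)])
qed

lemma monomial_aut_semidirect_inj: "inj_on (case_prod monomial_aut) (carrier (semidirect n q))"
proof
  fix x y assume "x \<in> carrier (semidirect n q)" "y \<in> carrier (semidirect n q)"
    and eq: "case_prod monomial_aut x = case_prod monomial_aut y"
  then obtain l p m s where xy: "x = (l, p)" "y = (m, s)" "p \<in> Pq n q" "s \<in> Pq n q"
    and l: "l \<in> {..<n} \<rightarrow>\<^sub>E (UNIV - {0})" and m: "m \<in> {..<n} \<rightarrow>\<^sub>E (UNIV - {0})"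
    by (auto simp: semidirect_def)
  have "\<And>a. a < n \<Longrightarrow> l a \<noteq> 0" using l by auto
  note inj = monomial_aut_inj[OF xy(3,4) this eq[unfolded xy, simplified]]
  have "l = m"
    using inj(2) PiE_arb[OF l] PiE_arb[OF m] by (metis ext lessThan_iff)
  then show "x = y" using inj(1) xy by simp
qed

lemma monomial_aut_semidirect_image:
  assumes rows: "distinct_rows n q"
  shows "case_prod monomial_aut ` carrier (semidirect n q) = carrier (Aut_gr n q)"
proof
  show "case_prod monomial_aut ` carrier (semidirect n q) \<subseteq> carrier (Aut_gr n q)"
    by (rule hom_carrier[OF monomial_aut_semidirect_hom])
  show "carrier (Aut_gr n q) \<subseteq> case_prod monomial_aut ` carrier (semidirect n q)"
  proof
    fix \<phi> assume "\<phi> \<in> carrier (Aut_gr n q)"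
    then interpret graded_aut n q \<phi> by unfold_locales (simp add: Aut_gr_def)
    obtain l p where "l \<in> {..<n} \<rightarrow>\<^sub>E (UNIV - {0})" "p \<in> Pq n q" "monomial_aut l p = \<phi>"
      by (rule aut_eq_monomial_aut[OF rows])
    then show "\<phi> \<in> case_prod monomial_aut ` carrier (semidirect n q)"
      by (intro image_eqI[of _ _ "(l, p)"]) (simp_all add: semidirect_def)
  qed
qed

lemma monomial_aut_semidirect_iso:
  "distinct_rows n q \<Longrightarrow> case_prod monomial_aut \<in> iso (semidirect n q) (Aut_gr n q)"
  by (simp add: iso_def bij_betw_def monomial_aut_semidirect_hom monomial_aut_semidirect_inj
      monomial_aut_semidirect_image)

end

theorem corollary4p6:
  fixes n :: nat and q :: "nat \<Rightarrow> nat \<Rightarrow> 'k::field"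
  assumes "n \<ge> 1"
    and "\<And>i j. i < n \<Longrightarrow> j < n \<Longrightarrow> q i j * q j i = 1"
    and "\<And>i. i < n \<Longrightarrow> q i i = 1"
    and "\<And>i j. i < n \<Longrightarrow> j < n \<Longrightarrow> i \<noteq> j \<Longrightarrow> (\<exists>l<n. q i l \<noteq> q j l)"
  shows "Aut_gr n q \<cong> semidirect n q"
proof -
  interpret qaffine n q using assms(2,3) by unfold_locales
  have "distinct_rows n q" using assms(4) by (simp add: distinct_rows_def)
  then have "case_prod monomial_aut \<in> iso (semidirect n q) (Aut_gr n q)"
    by (rule monomial_aut_semidirect_iso)
  then show ?thesis by (rule iso_sym_closed) (rule semidirect_mult_closed)
qed

end
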